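(* Let $\mathbb{K}$ be a field of characteristic zero and let $\mathcal{D}=\{\Delta^{p(1)}_{\beta(1)},\ldots,\Delta^{p(k)}_{\beta(k)}\}$ be a finite set of derivations of $\mathbb{K}[x_1,\ldots,x_n]$ of the form $\Delta^{p}_{\beta}=x_1^{p_1}\cdots x_n^{p_n}\sum_{j=1}^n\beta_jx_j\partial_j$ with $p(i)\in\mathbb{Z}^n_{\ge 0}$ and $\beta(i)\in\mathbb{K}^n\setminus\{0\}$, all of positive weight, i.e. $p(i)\neq 0$ for all $i$. Then the Lie algebra $\mathfrak{g}(\mathcal{D})$ generated by $\mathcal{D}$ is finite dimensional if and only if the elements of $\mathcal{D}$ can be renumbered in such a way that the following two conditions hold: 1) if $\beta(i)$ and $\beta(j)$ are proportional, then $\langle\beta(i),p(i)-p(j)\rangle=0$; 2) if $\beta(i)$ and $\beta(j)$ are not proportional and $j>i$, then $\langle\beta(j),p(i)\rangle=0$ and there exists $r_{ij}\in\mathbb{Z}_{\ge 0}$ such that $\langle\beta(i),p(j)+r_{ij}p(i)\rangle=0$.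
   Context: $\partial_i=\partial/\partial x_i$. For $\beta\in\mathbb{K}^n$ and $u\in\mathbb{Z}^n$, $\langle\beta,u\rangle:=\sum_{i=1}^n\beta_iu_i$. The weight of $\Delta^p_\beta$ is $\sum_j p_j$. The Lie bracket is the commutator of derivations, $[D_1,D_2]=D_1\circ D_2-D_2\circ D_1$, and $\mathfrak{g}(\mathcal{D})$ is the smallest Lie subalgebra of the Lie algebra of derivations of $\mathbb{K}[x_1,\ldots,x_n]$ containing $\mathcal{D}$. *)

theory Defs
  imports Main "HOL-Library.Poly_Mapping"
begin

text \<open>Polynomials in the variables indexed by the finite type 'n (so n = CARD('n))
  with coefficients in 'k: finitely supported maps from monomials (exponent vectors)
  to coefficients.\<close>
type_synonym ('n, 'k) mpoly = "('n \<Rightarrow>\<^sub>0 nat) \<Rightarrow>\<^sub>0 'k"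

definition const :: "'k::comm_semiring_1 \<Rightarrow> ('n, 'k) mpoly" where
  "const c = Poly_Mapping.single 0 c"

definition var :: "'n \<Rightarrow> ('n, 'k::comm_semiring_1) mpoly" where
  "var j = Poly_Mapping.single (Poly_Mapping.single j 1) 1"

definition pd :: "'n \<Rightarrow> ('n, 'k::comm_semiring_1) mpoly \<Rightarrow> ('n, 'k) mpoly" where
  "pd j f = (\<Sum>(m::'n \<Rightarrow>\<^sub>0 nat)\<in>Poly_Mapping.keys f. Poly_Mapping.single (m - Poly_Mapping.single j 1)
                              (of_nat (Poly_Mapping.lookup m j) * Poly_Mapping.lookup f m))"

definition Delta :: "('n::finite \<Rightarrow> nat) \<Rightarrow> ('n \<Rightarrow> 'k::comm_semiring_1)
                       \<Rightarrow> ('n, 'k) mpoly \<Rightarrow> ('n, 'k) mpoly" where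
  "Delta p \<beta> f = (\<Prod>j\<in>UNIV. var j ^ p j) * (\<Sum>j\<in>UNIV. const (\<beta> j) * (var j * pd j f))"

definition lie_bracket :: "('a \<Rightarrow> 'a::ab_group_add) \<Rightarrow> ('a \<Rightarrow> 'a) \<Rightarrow> 'a \<Rightarrow> 'a" where
  "lie_bracket D1 D2 = (\<lambda>f. D1 (D2 f) - D2 (D1 f))"

inductive_set lie_gen :: "(('n, 'k::comm_ring_1) mpoly \<Rightarrow> ('n, 'k) mpoly) set
                          \<Rightarrow> (('n, 'k) mpoly \<Rightarrow> ('n, 'k) mpoly) set"
  for D where
    base: "d \<in> D \<Longrightarrow> d \<in> lie_gen D"
  | zero: "(\<lambda>f. 0) \<in> lie_gen D"
  | add: "a \<in> lie_gen D \<Longrightarrow> b \<in> lie_gen D \<Longrightarrow> (\<lambda>f. a f + b f) \<in> lie_gen D"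
  | smult: "a \<in> lie_gen D \<Longrightarrow> (\<lambda>f. const c * a f) \<in> lie_gen D"
  | bracket: "a \<in> lie_gen D \<Longrightarrow> b \<in> lie_gen D \<Longrightarrow> lie_bracket a b \<in> lie_gen D"

definition fin_dim :: "(('n, 'k::comm_ring_1) mpoly \<Rightarrow> ('n, 'k) mpoly) set \<Rightarrow> bool" where
  "fin_dim S \<longleftrightarrow> (\<exists>B. finite B \<and>
      (\<forall>a\<in>S. \<exists>c. a = (\<lambda>f. \<Sum>b\<in>B. const (c b) * b f)))"

definition ip :: "('n::finite \<Rightarrow> 'k::comm_ring_1) \<Rightarrow> ('n \<Rightarrow> int) \<Rightarrow> 'k" where
  "ip \<beta> u = (\<Sum>l\<in>UNIV. \<beta> l * of_int (u l))"

definition proportional :: "('n \<Rightarrow> 'k::field) \<Rightarrow> ('n \<Rightarrow> 'k) \<Rightarrow> bool" where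
  "proportional a b \<longleftrightarrow> (\<exists>c. a = (\<lambda>l. c * b l))"

end

theory Submission
  imports Defs "HOL-Library.Function_Algebras" "HOL.Vector_Spaces"
begin

text \<open>
  Write \<open>\<Delta>\<^sup>a\<^sub>v = x\<^sup>a E\<^sub>v\<close> with \<open>E\<^sub>v = \<Sum>\<^sub>j v\<^sub>j x\<^sub>j \<partial>\<^sub>j\<close>, which is diagonal on monomials.
  Then \<open>[\<Delta>\<^sup>a\<^sub>v, \<Delta>\<^sup>b\<^sub>w] = \<Delta>\<^sup>a\<^sup>+\<^sup>b\<^sub>u\<close> with \<open>u = \<langle>v, b\<rangle> w - \<langle>w, a\<rangle> v\<close>,
  so everything reduces to bookkeeping of exponents and weights.

  Sufficiency: group the generators into classes of proportional weights, ordered by their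
  last member. The derivations \<open>\<Delta>\<^sup>e\<^sub>\<beta>\<^sub>(\<^sub>j\<^sub>)\<close> with \<open>e = \<Sum>\<^sub>i m\<^sub>i p(i)\<close>, where the multiplicities
  \<open>m\<close> take one generator from the class of \<open>j\<close>, none from later classes, and give every
  earlier class \<open>c\<close> a non-positive level \<open>\<langle>\<beta>(c), e\<rangle> / \<langle>\<beta>(c), p(c)\<rangle>\<close>, span a space that
  contains the generators and is closed under brackets. The level conditions bound \<open>m\<close>, so
  this spanning set is finite.

  Necessity: derivations with distinct exponents are linearly independent, so only finitely
  many exponents occur. Hence \<open>ad(\<Delta>\<^sup>a\<^sub>v)\<^sup>m \<Delta>\<^sup>b\<^sub>w\<close> vanishes for large \<open>m\<close>, which forces
  \<open>\<langle>v, b\<rangle> + r \<langle>v, a\<rangle> = 0\<close> for some \<open>r \<in> \<nat>\<close> when \<open>v\<close> and \<open>w\<close> are not proportional; a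
  similar argument gives condition 1. The relation \<open>\<langle>\<beta>(i), p(j)\<rangle> \<noteq> 0\<close> between generators
  with non-proportional weights has no cycles, since a shortest cycle could be shortened by
  a bracket, and any topological numbering of it satisfies condition 2.
\<close>

section \<open>Monomial derivations\<close>

abbreviation lookup :: "('a \<Rightarrow>\<^sub>0 'b::zero) \<Rightarrow> 'a \<Rightarrow> 'b" where
  "lookup \<equiv> Poly_Mapping.lookup"

abbreviation single :: "'a \<Rightarrow> 'b::zero \<Rightarrow> 'a \<Rightarrow>\<^sub>0 'b" where
  "single \<equiv> Poly_Mapping.single"

definition ip_nat :: "('n::finite \<Rightarrow> 'k::comm_semiring_1) \<Rightarrow> ('n \<Rightarrow> nat) \<Rightarrow> 'k" where
  "ip_nat v a = (\<Sum>l\<in>UNIV. v l * of_nat (a l))"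

definition monomial :: "('n::finite \<Rightarrow> nat) \<Rightarrow> ('n, 'k::comm_semiring_1) mpoly" where
  "monomial a = single (Abs_poly_mapping a) 1"

text \<open>The derivation \<open>\<Sum>\<^sub>j v\<^sub>j x\<^sub>j \<partial>\<^sub>j\<close> acts diagonally on monomials:
  it multiplies \<open>x\<^sup>y\<close> by \<open>\<langle>v, y\<rangle>\<close>.\<close>
definition euler :: "('n::finite \<Rightarrow> 'k::comm_semiring_1) \<Rightarrow> ('n, 'k) mpoly \<Rightarrow> ('n, 'k) mpoly" where
  "euler v f = Abs_poly_mapping (\<lambda>y. ip_nat v (lookup y) * lookup f y)"

lemma lookup_euler: "lookup (euler v f) y = ip_nat v (lookup y) * lookup f y"
proof -
  have "finite {y. ip_nat v (lookup y) * lookup f y \<noteq> 0}"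
    by (rule finite_subset[of _ "Poly_Mapping.keys f"]) (auto simp: in_keys_iff)
  then show ?thesis unfolding euler_def by simp
qed

lemma ip_nat_add: "ip_nat v (\<lambda>l. a l + b l) = ip_nat v a + ip_nat v b"
  by (simp add: ip_nat_def distrib_left sum.distrib)

lemma ip_nat_scale: "ip_nat (\<lambda>l. c * v l) a = c * ip_nat v a"
  by (simp add: ip_nat_def sum_distrib_left mult.assoc)

lemma ip_nat_diff:
  fixes v w :: "'n::finite \<Rightarrow> 'k::comm_ring_1"
  shows "ip_nat (\<lambda>l. c * v l - d * w l) a = c * ip_nat v a - d * ip_nat w a"
  by (simp add: ip_nat_def sum_distrib_left sum_subtractf left_diff_distrib mult.assoc)

lemma lookup_single_mult:
  fixes s :: "'n \<Rightarrow>\<^sub>0 nat" and g :: "('n, 'k::comm_semiring_1) mpoly"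
  shows "lookup (single s c * g) x = (if \<exists>y. x = s + y then c * lookup g (x - s) else 0)"
proof -
  have "lookup (single s c * g) x = (\<Sum>l. lookup (single s c) l * (\<Sum>q. lookup g q when x = l + q))"
    by (rule lookup_mult)
  also have "\<dots> = (\<Sum>l. (c * (\<Sum>q. lookup g q when x = l + q)) when s = l)"
    by (intro Sum_any.cong) (simp add: lookup_single when_def)
  also have "\<dots> = c * (\<Sum>q. lookup g q when x = s + q)"
    by simp
  also have "\<dots> = (if \<exists>y. x = s + y then c * lookup g (x - s) else 0)"
  proof (cases "\<exists>y. x = s + y")
    case True
    then obtain y where y: "x = s + y" by blast
    have "(\<Sum>q. lookup g q when x = s + q) = (\<Sum>q. lookup g q when q = y)"
      by (intro Sum_any.cong) (auto simp: y when_def)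
    then show ?thesis using y by simp
  qed (simp add: when_def)
  finally show ?thesis .
qed

lemma lookup_const_mult: "lookup (const c * g) x = c * lookup g x"
  unfolding const_def by (subst lookup_single_mult) simp

lemma const_0 [simp]: "const 0 = 0"
  by (simp add: const_def)

lemma const_1 [simp]: "const 1 = 1"
  by (simp add: const_def)

lemma const_add: "const (a + b) = const a + const b"
  by (simp add: const_def single_add)

lemma const_mult: "const (a * b) = const a * const b"
  by (simp add: const_def mult_single)

lemma monomial_add: "monomial (\<lambda>l. a l + b l) = monomial a * monomial b"
proof -
  have "Abs_poly_mapping (\<lambda>l. a l + b l) = Abs_poly_mapping a + Abs_poly_mapping b"
    by (rule poly_mapping_eqI) (simp add: lookup_add)
  then show ?thesis by (simp add: monomial_def mult_single)
qed

lemma var_power: "var j ^ e = single (single j e) 1"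
  by (induction e) (simp_all add: var_def mult_single single_add[symmetric])

lemma prod_var_power:
  "(\<Prod>j\<in>UNIV. (var j :: ('n::finite, 'k::comm_semiring_1) mpoly) ^ a j) = monomial a"
proof -
  have prod_single: "(\<Prod>j\<in>J. single (g j) (1::'k)) = single (\<Sum>j\<in>J. g j) 1"
    for J and g :: "'n \<Rightarrow> 'n \<Rightarrow>\<^sub>0 nat"
    by (induction J rule: infinite_finite_induct) (simp_all add: mult_single)
  have "(\<Prod>j\<in>UNIV. (var j :: ('n, 'k) mpoly) ^ a j) = single (\<Sum>j\<in>UNIV. single j (a j)) 1"
    by (simp add: var_power prod_single)
  also have "(\<Sum>j\<in>UNIV. single j (a j)) = Abs_poly_mapping a"
    by (rule poly_mapping_eqI) (simp add: lookup_sum lookup_single when_def)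
  finally show ?thesis by (simp add: monomial_def)
qed

lemma lookup_pd: "lookup (pd j f) y = of_nat (lookup y j + 1) * lookup f (y + single j 1)"
proof -
  let ?e = "single j (1::nat)" and ?c = "\<lambda>m. of_nat (lookup m j) * lookup f m"
  have shift: "(?c m when m - ?e = y) = (if m = y + ?e then ?c m else 0)" for m
  proof (cases "lookup m j = 0")
    case True
    then have "m \<noteq> y + ?e" by (auto simp: lookup_add)
    then show ?thesis using True by (simp add: when_def)
  next
    case False
    then have "m - ?e = y \<longleftrightarrow> m = y + ?e"
      by (auto simp: poly_mapping_eq_iff fun_eq_iff lookup_minus lookup_add lookup_single when_def)
    then show ?thesis by (simp add: when_def)
  qed
  have "lookup (pd j f) y = (\<Sum>m\<in>Poly_Mapping.keys f. ?c m when m - ?e = y)"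
    unfolding pd_def by (simp add: lookup_sum lookup_single)
  also have "\<dots> = (\<Sum>m\<in>Poly_Mapping.keys f. if m = y + ?e then ?c m else 0)"
    by (rule sum.cong) (simp_all only: shift)
  also have "\<dots> = ?c (y + ?e)"
    by (auto simp: in_keys_iff)
  finally show ?thesis by (simp add: lookup_add)
qed

lemma lookup_var_mult_pd: "lookup (var j * pd j f) x = of_nat (lookup x j) * lookup f x"
proof -
  let ?e = "single j (1::nat)"
  show ?thesis
  proof (cases "lookup x j = 0")
    case True
    then have "\<nexists>y. x = ?e + y" by (auto simp: lookup_add)
    then show ?thesis unfolding var_def using True by (subst lookup_single_mult) simp
  next
    case False
    then have x: "x = ?e + (x - ?e)"
      by (simp add: poly_mapping_eq_iff fun_eq_iff lookup_add lookup_minus lookup_single when_def)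
    then have "x - ?e + ?e = x" by (simp add: add.commute)
    then show ?thesis unfolding var_def using x False
      by (subst lookup_single_mult) (auto simp: lookup_pd lookup_minus)
  qed
qed

lemma Delta_eq_monomial_mult_euler: "Delta a v f = monomial a * euler v f"
proof -
  have "(\<Sum>j\<in>UNIV. const (v j) * (var j * pd j f)) = euler v f"
    by (rule poly_mapping_eqI)
      (simp add: lookup_sum lookup_const_mult lookup_var_mult_pd lookup_euler ip_nat_def
        sum_distrib_right mult.assoc)
  then show ?thesis unfolding Delta_def by (simp add: prod_var_power)
qed

lemma euler_monomial_mult:
  "euler v (monomial b * g) = monomial b * (euler v g + const (ip_nat v b) * g)"
proof (rule poly_mapping_eqI)
  fix x
  show "lookup (euler v (monomial b * g)) x =
      lookup (monomial b * (euler v g + const (ip_nat v b) * g)) x"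
  proof (cases "\<exists>y. x = Abs_poly_mapping b + y")
    case True
    then obtain y where x: "x = Abs_poly_mapping b + y" by blast
    have "ip_nat v (lookup (y + Abs_poly_mapping b)) = ip_nat v (lookup y) + ip_nat v b"
      by (simp add: ip_nat_def lookup_add distrib_left sum.distrib)
    then show ?thesis using x
      by (simp add: monomial_def lookup_euler lookup_single_mult lookup_add lookup_const_mult
          distrib_right add.commute)
  qed (simp add: monomial_def lookup_euler lookup_single_mult)
qed

lemma euler_commute: "euler v (euler w f) = euler w (euler v f)"
  by (rule poly_mapping_eqI) (simp add: lookup_euler algebra_simps)

lemma euler_add: "euler v (f + g) = euler v f + euler v g"
  by (rule poly_mapping_eqI) (simp add: lookup_euler lookup_add algebra_simps)

lemma euler_const_mult: "euler v (const c * f) = const c * euler v f"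
  by (rule poly_mapping_eqI) (simp add: lookup_euler lookup_const_mult mult.left_commute)

lemma euler_diff_weights:
  fixes v w :: "'n::finite \<Rightarrow> 'k::comm_ring_1"
  shows "euler (\<lambda>l. c * v l - d * w l) f = const c * euler v f - const d * euler w f"
  by (rule poly_mapping_eqI)
    (simp add: lookup_euler lookup_minus lookup_const_mult ip_nat_diff left_diff_distrib mult.assoc)

lemma lie_bracket_Delta:
  fixes v w :: "'n::finite \<Rightarrow> 'k::comm_ring_1"
  shows "lie_bracket (Delta a v) (Delta b w) =
    Delta (\<lambda>l. a l + b l) (\<lambda>l. ip_nat v b * w l - ip_nat w a * v l)"
proof
  fix f
  have ab: "Delta a v (Delta b w f) =
      monomial (\<lambda>l. a l + b l) * (euler v (euler w f) + const (ip_nat v b) * euler w f)"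
    by (simp add: Delta_eq_monomial_mult_euler euler_monomial_mult monomial_add mult.assoc)
  have ba: "Delta b w (Delta a v f) =
      monomial (\<lambda>l. a l + b l) * (euler v (euler w f) + const (ip_nat w a) * euler v f)"
    by (simp add: Delta_eq_monomial_mult_euler euler_monomial_mult monomial_add mult_ac
        euler_commute)
  show "lie_bracket (Delta a v) (Delta b w) f =
      Delta (\<lambda>l. a l + b l) (\<lambda>l. ip_nat v b * w l - ip_nat w a * v l) f"
    unfolding lie_bracket_def ab ba Delta_eq_monomial_mult_euler[of "\<lambda>l. a l + b l"]
      euler_diff_weights
    by (simp add: algebra_simps)
qed

lemma Delta_add: "Delta a v (f + g) = Delta a v f + Delta a v g"
  by (simp add: Delta_eq_monomial_mult_euler euler_add distrib_left)

lemma Delta_const_mult: "Delta a v (const c * f) = const c * Delta a v f"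
  by (simp add: Delta_eq_monomial_mult_euler euler_const_mult mult.left_commute)

lemma Delta_scale_weights:
  fixes v :: "'n::finite \<Rightarrow> 'k::comm_ring_1"
  shows "Delta a (\<lambda>l. c * v l) f = const c * Delta a v f"
  using euler_diff_weights[of c v 0 v f]
  by (simp add: Delta_eq_monomial_mult_euler mult.left_commute)

lemma Delta_zero_weights: "Delta a (\<lambda>_. 0) = (\<lambda>f. 0)"
  by (rule ext) (simp add: Delta_eq_monomial_mult_euler euler_def ip_nat_def)

lemma Delta_var: "Delta a v (var l) = single (Abs_poly_mapping a + single l 1) (v l)"
proof -
  have "ip_nat v (lookup (single l 1)) = (\<Sum>l'\<in>UNIV. if l = l' then v l' else 0)"
    unfolding ip_nat_def by (intro sum.cong) (auto simp: lookup_single when_def)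
  then have "ip_nat v (lookup (single l 1)) = v l"
    by simp
  then have "euler v (var l) = single (single l 1) (v l)"
    by (intro poly_mapping_eqI) (auto simp: lookup_euler var_def lookup_single when_def)
  then show ?thesis by (simp add: Delta_eq_monomial_mult_euler monomial_def mult_single)
qed

section \<open>Spans of operators\<close>

definition op_scale ::
    "'k::comm_semiring_1 \<Rightarrow> (('n, 'k) mpoly \<Rightarrow> ('n, 'k) mpoly) \<Rightarrow> ('n, 'k) mpoly \<Rightarrow> ('n, 'k) mpoly"
  where
  "op_scale c F = (\<lambda>f. const c * F f)"

global_interpretation op: Vector_Spaces.vector_space
  "op_scale :: 'k::field \<Rightarrow> (('n, 'k) mpoly \<Rightarrow> ('n, 'k) mpoly) \<Rightarrow> _"
  by unfold_locales (simp_all add: op_scale_def fun_eq_iff const_add const_mult algebra_simps)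

lemma op_scale_apply: "op_scale c F f = const c * F f"
  by (simp add: op_scale_def)

lemma sum_apply: "(\<Sum>b\<in>B. F b) x = (\<Sum>b\<in>B. F b x)"
  by (induction B rule: infinite_finite_induct) auto

lemma fin_dim_iff_span:
  fixes S :: "(('n, 'k::field) mpoly \<Rightarrow> ('n, 'k) mpoly) set"
  shows "fin_dim S \<longleftrightarrow> (\<exists>B. finite B \<and> S \<subseteq> op.span B)"
proof -
  have combination: "(\<Sum>b\<in>B. op_scale (c b) b) = (\<lambda>f. \<Sum>b\<in>B. const (c b) * b f)"
    for B :: "(('n, 'k) mpoly \<Rightarrow> ('n, 'k) mpoly) set" and c
    by (simp add: fun_eq_iff sum_apply op_scale_apply)
  have "S \<subseteq> op.span B \<longleftrightarrow> (\<forall>a\<in>S. \<exists>c. a = (\<lambda>f. \<Sum>b\<in>B. const (c b) * b f))"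
    if "finite B" for B :: "(('n, 'k) mpoly \<Rightarrow> ('n, 'k) mpoly) set"
    unfolding op.span_finite[OF that] combination by (simp add: subset_iff image_iff Ball_def)
  then show ?thesis unfolding fin_dim_def by (metis (no_types))
qed

definition linear_op :: "(('n, 'k::comm_ring_1) mpoly \<Rightarrow> ('n, 'k) mpoly) \<Rightarrow> bool" where
  "linear_op F \<longleftrightarrow> (\<forall>f g. F (f + g) = F f + F g) \<and> (\<forall>c f. F (const c * f) = const c * F f)"

lemma linear_op_Delta: "linear_op (Delta a v)"
  by (simp add: linear_op_def Delta_add Delta_const_mult)

lemma linear_op_zero:
  assumes "linear_op F" shows "F 0 = 0"
  using assms unfolding linear_op_def by (metis add_cancel_right_right)

lemma subspace_linear_op: "op.subspace {F :: ('n, 'k::field) mpoly \<Rightarrow> _. linear_op F}"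
  by (rule op.subspaceI) (simp_all add: linear_op_def op_scale_apply distrib_left mult.left_commute)

lemma lie_bracket_antisym: "lie_bracket G F = - lie_bracket F G"
  by (simp add: lie_bracket_def fun_eq_iff)

lemma subspace_lie_bracket_left:
  assumes "linear_op G"
  shows "op.subspace {F. lie_bracket F G \<in> op.span B}"
proof (rule op.subspaceI)
  show "0 \<in> {F. lie_bracket F G \<in> op.span B}"
    using linear_op_zero[OF assms] op.span_zero by (simp add: lie_bracket_def zero_fun_def)
next
  fix F1 F2 assume "F1 \<in> {F. lie_bracket F G \<in> op.span B}" "F2 \<in> {F. lie_bracket F G \<in> op.span B}"
  moreover have "lie_bracket (F1 + F2) G = lie_bracket F1 G + lie_bracket F2 G"
    using assms by (simp add: lie_bracket_def linear_op_def fun_eq_iff)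
  ultimately show "F1 + F2 \<in> {F. lie_bracket F G \<in> op.span B}"
    by (simp add: op.span_add)
next
  fix c F assume "F \<in> {F. lie_bracket F G \<in> op.span B}"
  moreover have "lie_bracket (op_scale c F) G = op_scale c (lie_bracket F G)"
    using assms
    by (simp add: lie_bracket_def linear_op_def op_scale_apply fun_eq_iff right_diff_distrib)
  ultimately show "op_scale c F \<in> {F. lie_bracket F G \<in> op.span B}"
    by (simp add: op.span_scale)
qed

lemma lie_bracket_in_span:
  assumes lin: "\<forall>b\<in>B. linear_op b"
    and closed: "\<forall>b\<in>B. \<forall>b'\<in>B. lie_bracket b b' \<in> op.span B"
    and F: "F \<in> op.span B" and G: "G \<in> op.span B"
  shows "lie_bracket F G \<in> op.span B"
proof -
  have "op.span B \<subseteq> {H. linear_op H}"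
    by (rule op.span_minimal[OF _ subspace_linear_op]) (use lin in blast)
  then have lin_F: "linear_op F" using F by blast
  have "lie_bracket F b \<in> op.span B" if b: "b \<in> B" for b
  proof -
    have "op.span B \<subseteq> {H. lie_bracket H b \<in> op.span B}"
      by (rule op.span_minimal[OF _ subspace_lie_bracket_left]) (use closed lin b in auto)
    then show ?thesis using F by blast
  qed
  then have "lie_bracket b F \<in> op.span B" if "b \<in> B" for b
    using that op.span_neg lie_bracket_antisym[of b F] by metis
  then have "op.span B \<subseteq> {H. lie_bracket H F \<in> op.span B}"
    by (intro op.span_minimal[OF _ subspace_lie_bracket_left[OF lin_F]]) blast
  then have "lie_bracket G F \<in> op.span B" using G by blast
  then show ?thesis
    using op.span_neg lie_bracket_antisym[of F G] by metis
qed

lemma lie_gen_subset_span: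
  assumes lin: "\<forall>b\<in>B. linear_op b"
    and closed: "\<forall>b\<in>B. \<forall>b'\<in>B. lie_bracket b b' \<in> op.span B"
    and gen: "D \<subseteq> op.span B"
  shows "lie_gen D \<subseteq> op.span B"
proof
  fix F assume "F \<in> lie_gen D"
  then show "F \<in> op.span B"
  proof (induction rule: lie_gen.induct)
    case zero
    show ?case using op.span_zero by (simp only: zero_fun_def)
  next
    case (add a b)
    then show ?case using op.span_add by (simp only: plus_fun_def)
  next
    case (smult a c)
    have "op_scale c a \<in> op.span B" using smult.IH by (rule op.span_scale)
    moreover have "op_scale c a = (\<lambda>f. const c * a f)"
      by (simp add: fun_eq_iff op_scale_apply)
    ultimately show ?case by metis
  next
    case (bracket a b)
    then show ?case using lie_bracket_in_span[OF lin closed] by blast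
  qed (use gen in blast)
qed

lemma lookup_Delta_var:
  "lookup (Delta a v (var l)) (Abs_poly_mapping a' + single l 1) = (if a = a' then v l else 0)"
proof -
  have "Abs_poly_mapping a + single l 1 = Abs_poly_mapping a' + single l 1 \<longleftrightarrow> a = a'"
  proof
    assume "Abs_poly_mapping a + single l 1 = Abs_poly_mapping a' + single l 1"
    then have "lookup (Abs_poly_mapping a) = lookup (Abs_poly_mapping a')" by simp
    then show "a = a'" by simp
  qed simp
  then show ?thesis by (simp add: Delta_var lookup_single when_def)
qed

lemma inj_on_Deltas:
  assumes nz: "\<forall>a\<in>A. V a \<noteq> (\<lambda>_. 0)"
  shows "inj_on (\<lambda>a. Delta a (V a)) A"
proof (rule inj_onI)
  fix a a' assume a: "a \<in> A" and "a' \<in> A" and eq: "Delta a (V a) = Delta a' (V a')"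
  obtain l where l: "V a l \<noteq> 0" using nz a by auto
  have "V a l = lookup (Delta a (V a) (var l)) (Abs_poly_mapping a + single l 1)"
    by (simp only: lookup_Delta_var) simp
  also have "\<dots> = (if a' = a then V a' l else 0)"
    by (simp only: eq lookup_Delta_var)
  finally show "a = a'" using l by (cases "a' = a") simp_all
qed

lemma independent_Deltas:
  fixes V :: "('n::finite \<Rightarrow> nat) \<Rightarrow> 'n \<Rightarrow> 'k::field"
  assumes nz: "\<forall>a\<in>A. V a \<noteq> (\<lambda>_. 0)"
  shows "op.independent ((\<lambda>a. Delta a (V a)) ` A)"
proof
  assume "op.dependent ((\<lambda>a. Delta a (V a)) ` A)"
  then obtain t u where t: "finite t" "t \<subseteq> (\<lambda>a. Delta a (V a)) ` A"
      "(\<Sum>F\<in>t. op_scale (u F) F) = 0" and "\<exists>F\<in>t. u F \<noteq> 0"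
    unfolding op.dependent_explicit by blast
  then obtain a0 where a0: "a0 \<in> A" "Delta a0 (V a0) \<in> t" "u (Delta a0 (V a0)) \<noteq> 0"
    by blast
  obtain l where l: "V a0 l \<noteq> 0" using nz a0(1) by auto
  let ?m = "Abs_poly_mapping a0 + single l 1"
  have coeff: "u F * lookup (F (var l)) ?m =
      (if F = Delta a0 (V a0) then u (Delta a0 (V a0)) * V a0 l else 0)" if "F \<in> t" for F
  proof -
    obtain a where a: "a \<in> A" "F = Delta a (V a)" using t(2) \<open>F \<in> t\<close> by blast
    have "F = Delta a0 (V a0) \<longleftrightarrow> a = a0"
      using inj_onD[OF inj_on_Deltas[OF nz] _ a(1) a0(1)] a(2) by auto
    then show ?thesis using a(2) by (simp only: lookup_Delta_var) simp
  qed
  have "0 = lookup ((\<Sum>F\<in>t. op_scale (u F) F) (var l)) ?m"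
    using t(3) by simp
  also have "\<dots> = (\<Sum>F\<in>t. u F * lookup (F (var l)) ?m)"
    by (simp add: sum_apply op_scale_apply lookup_sum lookup_const_mult)
  also have "\<dots> = (\<Sum>F\<in>t. if F = Delta a0 (V a0) then u (Delta a0 (V a0)) * V a0 l else 0)"
    by (rule sum.cong) (simp_all only: coeff)
  also have "\<dots> = u (Delta a0 (V a0)) * V a0 l"
    using t(1) a0(2) by simp
  finally show False using a0(3) l by simp
qed

lemma fin_dim_finite_exponents:
  fixes T :: "(('n::finite \<Rightarrow> nat) \<times> ('n \<Rightarrow> 'k::field)) set"
  assumes fd: "fin_dim S" and T: "\<forall>(a, v)\<in>T. Delta a v \<in> S"
  shows "finite {a. \<exists>v. (a, v) \<in> T \<and> v \<noteq> (\<lambda>_. 0)}" (is "finite ?A")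
proof (rule ccontr)
  assume "infinite ?A"
  obtain B where B: "finite B" "S \<subseteq> op.span B"
    using fd unfolding fin_dim_iff_span by blast
  obtain A where A: "finite A" "card A = Suc (card B)" "A \<subseteq> ?A"
    using infinite_arbitrarily_large[OF \<open>infinite ?A\<close>] by blast
  define V where "V a = (SOME v. (a, v) \<in> T \<and> v \<noteq> (\<lambda>_. 0))" for a
  have V: "(a, V a) \<in> T \<and> V a \<noteq> (\<lambda>_. 0)" if "a \<in> A" for a
    using someI_ex[of "\<lambda>v. (a, v) \<in> T \<and> v \<noteq> (\<lambda>_. 0)"] A(3) that unfolding V_def by blast
  have "(\<lambda>a. Delta a (V a)) ` A \<subseteq> op.span B"
    using V T B(2) by blast
  then have "card ((\<lambda>a. Delta a (V a)) ` A) \<le> card B"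
    using op.independent_span_bound[OF B(1) independent_Deltas] V by blast
  moreover have "card ((\<lambda>a. Delta a (V a)) ` A) = card A"
    using card_image[OF inj_on_Deltas] V by blast
  ultimately show False using A(2) by simp
qed

section \<open>Proportional weights\<close>

lemma proportional_refl: "proportional v v"
  unfolding proportional_def by (intro exI[of _ 1]) simp

lemma proportional_trans: "proportional u v \<Longrightarrow> proportional v w \<Longrightarrow> proportional u w"
  unfolding proportional_def by (metis mult.assoc)

lemma proportional_nonzero_factor:
  fixes v w :: "'n \<Rightarrow> 'k::field"
  assumes "proportional v w" "v \<noteq> (\<lambda>_. 0)"
  obtains c where "c \<noteq> 0" "v = (\<lambda>l. c * w l)"
  using assms unfolding proportional_def by fastforce

lemma proportional_sym:
  fixes v w :: "'n \<Rightarrow> 'k::field"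
  assumes "proportional v w" "v \<noteq> (\<lambda>_. 0)"
  shows "proportional w v"
proof -
  obtain c where "c \<noteq> 0" "v = (\<lambda>l. c * w l)"
    using proportional_nonzero_factor[OF assms] .
  then have "w = (\<lambda>l. inverse c * v l)" by (simp add: fun_eq_iff)
  then show ?thesis unfolding proportional_def by blast
qed

lemma proportional_scale_left:
  fixes v w :: "'n \<Rightarrow> 'k::field"
  assumes "c \<noteq> 0"
  shows "proportional (\<lambda>l. c * v l) w \<longleftrightarrow> proportional v w"
proof
  assume "proportional (\<lambda>l. c * v l) w"
  then obtain d where "(\<lambda>l. c * v l) = (\<lambda>l. d * w l)" unfolding proportional_def by blast
  then have "v = (\<lambda>l. (d / c) * w l)" using assms by (simp add: fun_eq_iff field_simps)
  then show "proportional v w" unfolding proportional_def by blast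
next
  assume "proportional v w"
  then obtain d where "v = (\<lambda>l. d * w l)" unfolding proportional_def by blast
  then have "(\<lambda>l. c * v l) = (\<lambda>l. (c * d) * w l)" by (simp add: mult.assoc)
  then show "proportional (\<lambda>l. c * v l) w" unfolding proportional_def by blast
qed

lemma proportional_scale_right:
  fixes v w :: "'n \<Rightarrow> 'k::field"
  assumes "c \<noteq> 0"
  shows "proportional v (\<lambda>l. c * w l) \<longleftrightarrow> proportional v w"
proof
  assume "proportional v (\<lambda>l. c * w l)"
  then obtain d where "v = (\<lambda>l. d * (c * w l))" unfolding proportional_def by blast
  then have "v = (\<lambda>l. (d * c) * w l)" by (simp add: mult.assoc)
  then show "proportional v w" unfolding proportional_def by blast
next
  assume "proportional v w"
  then obtain d where "v = (\<lambda>l. d * w l)" unfolding proportional_def by blast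
  then have "v = (\<lambda>l. (d / c) * (c * w l))" using assms by (simp add: fun_eq_iff)
  then show "proportional v (\<lambda>l. c * w l)" unfolding proportional_def by blast
qed

lemma combination_nonzero:
  fixes v w :: "'n \<Rightarrow> 'k::field"
  assumes "\<not> proportional w v" "s \<noteq> 0"
  shows "(\<lambda>l. s * w l + t * v l) \<noteq> (\<lambda>_. 0)"
proof
  assume "(\<lambda>l. s * w l + t * v l) = (\<lambda>_. 0)"
  then have "w = (\<lambda>l. (- t / s) * v l)"
    using assms(2) by (auto simp: fun_eq_iff field_simps eq_neg_iff_add_eq_0 dest: fun_cong)
  then show False using assms(1) unfolding proportional_def by blast
qed

lemma combination_not_proportional:
  fixes v w :: "'n \<Rightarrow> 'k::field"
  assumes np: "\<not> proportional w v" and v: "v \<noteq> (\<lambda>_. 0)" and s: "s \<noteq> 0"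
  shows "\<not> proportional v (\<lambda>l. s * w l + t * v l)"
proof
  assume "proportional v (\<lambda>l. s * w l + t * v l)"
  then obtain c where c: "v = (\<lambda>l. c * (s * w l + t * v l))" unfolding proportional_def by blast
  have "c \<noteq> 0" using c v by auto
  have "w = (\<lambda>l. ((1 - c * t) / (c * s)) * v l)"
  proof
    fix l
    have "v l = c * (s * w l + t * v l)" using c by metis
    then show "w l = ((1 - c * t) / (c * s)) * v l" using \<open>c \<noteq> 0\<close> s by (simp add: field_simps)
  qed
  then show False using np unfolding proportional_def by blast
qed

lemma bracket_weight_not_proportional:
  fixes v w :: "'n \<Rightarrow> 'k::field"
  assumes np: "\<not> proportional w v" and v: "v \<noteq> (\<lambda>_. 0)" and w: "w \<noteq> (\<lambda>_. 0)"
    and x: "x \<noteq> 0" and y: "y \<noteq> 0"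
  shows "\<not> proportional v (\<lambda>l. x * w l - y * v l)" and "\<not> proportional w (\<lambda>l. x * w l - y * v l)"
proof -
  have "\<not> proportional v (\<lambda>l. x * w l + (- y) * v l)"
    by (rule combination_not_proportional[OF np v x])
  then show "\<not> proportional v (\<lambda>l. x * w l - y * v l)" by simp
  have "\<not> proportional v w" using proportional_sym np v by blast
  moreover have "- y \<noteq> 0" using y by simp
  ultimately have "\<not> proportional w (\<lambda>l. (- y) * v l + x * w l)"
    by (rule combination_not_proportional[OF _ w])
  then show "\<not> proportional w (\<lambda>l. x * w l - y * v l)" by (simp add: add.commute)
qed

section \<open>Sufficiency\<close>

text \<open>Conditions 1 and 2 of the theorem for the identity numbering.\<close>
locale admissible_family =
  fixes k :: nat and p :: "nat \<Rightarrow> 'n::finite \<Rightarrow> nat" and \<beta> :: "nat \<Rightarrow> 'n \<Rightarrow> 'k::field"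
  assumes weights_nonzero: "\<And>i. i < k \<Longrightarrow> \<beta> i \<noteq> (\<lambda>_. 0)"
    and proportional_ip_eq: "\<And>i j. i < k \<Longrightarrow> j < k \<Longrightarrow> proportional (\<beta> i) (\<beta> j) \<Longrightarrow>
      ip_nat (\<beta> i) (p i) = ip_nat (\<beta> i) (p j)"
    and ip_later_earlier: "\<And>i j. i < j \<Longrightarrow> j < k \<Longrightarrow> \<not> proportional (\<beta> i) (\<beta> j) \<Longrightarrow>
      ip_nat (\<beta> j) (p i) = 0"
    and ip_earlier_later_root: "\<And>i j. i < j \<Longrightarrow> j < k \<Longrightarrow> \<not> proportional (\<beta> i) (\<beta> j) \<Longrightarrow>
      \<exists>r. ip_nat (\<beta> i) (p j) + of_nat r * ip_nat (\<beta> i) (p i) = 0"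
begin

definition parallel :: "nat \<Rightarrow> nat \<Rightarrow> bool" where
  "parallel i j \<longleftrightarrow> proportional (\<beta> i) (\<beta> j)"

definition class_max :: "nat \<Rightarrow> nat" where
  "class_max i = Max {j. j < k \<and> parallel i j}"

definition self_ip :: "nat \<Rightarrow> 'k" where
  "self_ip c = ip_nat (\<beta> c) (p c)"

lemma parallel_refl: "parallel i i"
  by (simp add: parallel_def proportional_refl)

lemma parallel_sym: "i < k \<Longrightarrow> parallel i j \<Longrightarrow> parallel j i"
  unfolding parallel_def using proportional_sym weights_nonzero by blast

lemma parallel_trans: "parallel i j \<Longrightarrow> parallel j l \<Longrightarrow> parallel i l"
  unfolding parallel_def using proportional_trans by blast

lemma parallel_factor:
  assumes "i < k" "parallel i j"
  obtains c where "c \<noteq> 0" "\<beta> i = (\<lambda>l. c * \<beta> j l)"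
  using proportional_nonzero_factor assms weights_nonzero unfolding parallel_def by blast

lemma class_max:
  assumes "i < k"
  shows "i \<le> class_max i" "class_max i < k" "parallel i (class_max i)"
proof -
  have "i \<in> {j. j < k \<and> parallel i j}" using assms parallel_refl by simp
  moreover have "finite {j. j < k \<and> parallel i j}" by simp
  ultimately have "i \<le> class_max i" "class_max i \<in> {j. j < k \<and> parallel i j}"
    unfolding class_max_def using Max_ge Max_in by blast+
  then show "i \<le> class_max i" "class_max i < k" "parallel i (class_max i)" by auto
qed

lemma class_max_eq_iff:
  assumes "i < k" "j < k"
  shows "class_max i = class_max j \<longleftrightarrow> parallel i j"
proof
  assume eq: "class_max i = class_max j"
  have "parallel i (class_max j)" using class_max(3)[OF assms(1)] eq by simp
  moreover have "parallel (class_max j) j"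
    by (rule parallel_sym[OF assms(2) class_max(3)[OF assms(2)]])
  ultimately show "parallel i j" by (rule parallel_trans)
next
  assume ij: "parallel i j"
  have ji: "parallel j i" using parallel_sym[OF assms(1) ij] .
  have "parallel i l \<longleftrightarrow> parallel j l" for l
    using parallel_trans[OF ij, of l] parallel_trans[OF ji, of l] by blast
  then have "{l. l < k \<and> parallel i l} = {l. l < k \<and> parallel j l}"
    by simp
  then show "class_max i = class_max j" unfolding class_max_def by simp
qed

lemma class_max_idem:
  assumes "i < k" shows "class_max (class_max i) = class_max i"
  using class_max_eq_iff[OF assms class_max(2)[OF assms]] class_max(3)[OF assms]
  by (rule iffD2[THEN sym])

lemma ip_parallel:
  assumes "i < k" "c < k" "parallel i c"
  shows "ip_nat (\<beta> c) (p i) = self_ip c"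
proof -
  have "parallel c i" using parallel_sym[OF assms(1,3)] .
  then show ?thesis
    using proportional_ip_eq[of c i] assms unfolding self_ip_def parallel_def by simp
qed

lemma self_ip_parallel:
  assumes "c < k" "parallel c j" "j < k"
  obtains \<mu> where "\<mu> \<noteq> 0" "\<beta> c = (\<lambda>l. \<mu> * \<beta> j l)" "self_ip c = \<mu> * self_ip j"
proof -
  obtain \<mu> where \<mu>: "\<mu> \<noteq> 0" "\<beta> c = (\<lambda>l. \<mu> * \<beta> j l)"
    using parallel_factor[OF assms(1,2)] .
  have "self_ip c = \<mu> * ip_nat (\<beta> j) (p c)"
    unfolding self_ip_def \<mu>(2) by (rule ip_nat_scale)
  also have "ip_nat (\<beta> j) (p c) = self_ip j"
    using ip_parallel[OF assms(1,3,2)] .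
  finally show ?thesis using \<mu> that by blast
qed

lemma ip_before_class_max:
  assumes "i < class_max c" "c < k" "\<not> parallel i c"
  shows "ip_nat (\<beta> c) (p i) = 0"
proof -
  have "parallel (class_max c) c"
    by (rule parallel_sym[OF assms(2) class_max(3)[OF assms(2)]])
  then have "\<not> parallel i (class_max c)"
    using parallel_trans[of i "class_max c" c] assms(3) by blast
  then have "ip_nat (\<beta> (class_max c)) (p i) = 0"
    unfolding parallel_def by (rule ip_later_earlier[OF assms(1) class_max(2)[OF assms(2)]])
  moreover obtain \<mu> where "\<beta> c = (\<lambda>l. \<mu> * \<beta> (class_max c) l)"
    using parallel_factor[OF assms(2) class_max(3)[OF assms(2)]] .
  ultimately show ?thesis by (simp add: ip_nat_scale)
qed

text \<open>The \<open>r\<close> of condition 2 for the pair \<open>(c, i)\<close>; when \<open>\<langle>\<beta>(c), p(c)\<rangle> = 0\<close> every \<open>r\<close>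
  works and \<open>0\<close> is chosen.\<close>
definition root :: "nat \<Rightarrow> nat \<Rightarrow> nat" where
  "root c i = (if self_ip c = 0 then 0 else SOME r. ip_nat (\<beta> c) (p i) + of_nat r * self_ip c = 0)"

lemma ip_after_class_max:
  assumes "class_max c < i" "i < k" "c < k"
  shows "ip_nat (\<beta> c) (p i) = - of_nat (root (class_max c) i) * self_ip c"
proof -
  let ?L = "class_max c"
  have L: "?L < k" "parallel c ?L" using class_max assms(3) by auto
  have "\<not> parallel ?L i"
  proof
    assume "parallel ?L i"
    then have "?L = class_max i"
      using class_max_eq_iff[OF L(1) assms(2)] class_max_idem[OF assms(3)] by simp
    then show False using class_max(1)[OF assms(2)] assms(1) by simp
  qed
  then obtain r where "ip_nat (\<beta> ?L) (p i) + of_nat r * self_ip ?L = 0"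
    using ip_earlier_later_root[OF assms(1,2)] unfolding self_ip_def parallel_def by blast
  then have L_root: "ip_nat (\<beta> ?L) (p i) = - of_nat (root ?L i) * self_ip ?L"
    unfolding root_def using someI[where P = "\<lambda>r. ip_nat (\<beta> ?L) (p i) + of_nat r * self_ip ?L = 0"]
    by (auto simp: eq_neg_iff_add_eq_0)
  obtain \<mu> where "\<beta> c = (\<lambda>l. \<mu> * \<beta> ?L l)" "self_ip c = \<mu> * self_ip ?L"
    using self_ip_parallel[OF assms(3) L(2) L(1)] by blast
  then show ?thesis using L_root by (simp add: ip_nat_scale)
qed

text \<open>\<open>ratio c i\<close> stands for the integer \<open>\<langle>\<beta>(c), p(i)\<rangle> / \<langle>\<beta>(c), p(c)\<rangle>\<close>; it depends on
  \<open>c\<close> only through its class.\<close>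
definition ratio :: "nat \<Rightarrow> nat \<Rightarrow> int" where
  "ratio c i =
    (if parallel i c then 1 else if class_max c < i then - int (root (class_max c) i) else 0)"

lemma ip_eq_ratio:
  assumes "i < k" "c < k"
  shows "ip_nat (\<beta> c) (p i) = self_ip c * of_int (ratio c i)"
proof -
  have "parallel (class_max c) c"
    by (rule parallel_sym[OF assms(2) class_max(3)[OF assms(2)]])
  then consider "parallel i c" | "\<not> parallel i c" "class_max c < i"
    | "\<not> parallel i c" "i < class_max c"
    by (metis linorder_neqE_nat)
  then show ?thesis
    by cases
      (use assms ip_parallel ip_after_class_max ip_before_class_max in \<open>auto simp: ratio_def\<close>)
qed

lemma ratio_parallel:
  assumes "c < k" "j < k" "parallel c j"
  shows "ratio c = ratio j"
proof
  fix i
  have "parallel i c \<longleftrightarrow> parallel i j"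
    using parallel_trans[of i c j] parallel_trans[of i j c] parallel_sym[OF assms(1,3)] assms(3)
    by blast
  moreover have "class_max c = class_max j"
    using class_max_eq_iff assms by blast
  ultimately show "ratio c i = ratio j i" by (simp add: ratio_def)
qed

definition exponent :: "(nat \<Rightarrow> nat) \<Rightarrow> 'n \<Rightarrow> nat" where
  "exponent m = (\<lambda>l. \<Sum>i<k. m i * p i l)"

definition level :: "nat \<Rightarrow> (nat \<Rightarrow> nat) \<Rightarrow> int" where
  "level c m = (\<Sum>i<k. int (m i) * ratio c i)"

lemma ip_exponent:
  assumes "c < k"
  shows "ip_nat (\<beta> c) (exponent m) = self_ip c * of_int (level c m)"
proof -
  have "ip_nat (\<beta> c) (exponent m) = (\<Sum>i<k. of_nat (m i) * ip_nat (\<beta> c) (p i))"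
    unfolding ip_nat_def exponent_def
    by (simp add: sum_distrib_left sum_distrib_right mult_ac) (rule sum.swap)
  also have "\<dots> = (\<Sum>i<k. of_nat (m i) * (self_ip c * of_int (ratio c i)))"
    using ip_eq_ratio[OF _ assms] by simp
  also have "\<dots> = self_ip c * of_int (level c m)"
    unfolding level_def by (simp add: sum_distrib_left mult_ac)
  finally show ?thesis .
qed

lemma exponent_add: "exponent (\<lambda>i. m i + m' i) = (\<lambda>l. exponent m l + exponent m' l)"
  unfolding exponent_def by (simp add: distrib_right sum.distrib)

lemma exponent_unit:
  assumes "j < k" shows "exponent (\<lambda>i. if i = j then 1 else 0) = p j"
proof
  fix l
  have "exponent (\<lambda>i. if i = j then 1 else 0) l = (\<Sum>i<k. if i = j then p j l else 0)"
    unfolding exponent_def by (rule sum.cong) auto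
  then show "exponent (\<lambda>i. if i = j then 1 else 0) l = p j l" using assms by simp
qed

lemma level_add: "level c (\<lambda>i. m i + m' i) = level c m + level c m'"
  unfolding level_def by (simp add: distrib_right sum.distrib)

lemma level_parallel: "c < k \<Longrightarrow> j < k \<Longrightarrow> parallel c j \<Longrightarrow> level c m = level j m"
  unfolding level_def using ratio_parallel by simp

text \<open>The label \<open>(m, j)\<close> stands for \<open>\<Delta>\<^sup>e\<^sub>\<beta>\<^sub>(\<^sub>j\<^sub>)\<close> with \<open>e = \<Sum>\<^sub>i m\<^sub>i p(i)\<close>.\<close>
definition basis_label :: "(nat \<Rightarrow> nat) \<Rightarrow> nat \<Rightarrow> bool" where
  "basis_label m j \<longleftrightarrow> j < k \<and> (\<forall>i. k \<le> i \<longrightarrow> m i = 0) \<and>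
     (\<forall>i<k. m i \<noteq> 0 \<longrightarrow> class_max i \<le> class_max j) \<and>
     (\<Sum>i<k. if parallel i j then m i else 0) = 1 \<and>
     (\<forall>c<k. class_max c < class_max j \<longrightarrow> level c m \<le> 0)"

lemma level_own:
  assumes m: "basis_label m j" and c: "c < k" "parallel c j"
  shows "level c m = 1"
proof -
  have j: "j < k" using m by (simp add: basis_label_def)
  have "int (m i) * ratio c i = int (if parallel i j then m i else 0)" if i: "i < k" for i
  proof (cases "parallel i j")
    case True
    then have "parallel i c" using parallel_trans parallel_sym[OF c] by blast
    then show ?thesis using True by (simp add: ratio_def)
  next
    case False
    then have not_ic: "\<not> parallel i c" using parallel_trans c(2) by blast
    have "m i = 0" if "class_max c < i"
    proof (rule ccontr)
      assume "m i \<noteq> 0"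
      then have "class_max i \<le> class_max j" using m i by (simp add: basis_label_def)
      moreover have "class_max c = class_max j" using class_max_eq_iff[OF c(1) j] c(2) by simp
      ultimately show False using that class_max(1)[OF i] by simp
    qed
    then show ?thesis using False not_ic by (simp add: ratio_def)
  qed
  then have "level c m = (\<Sum>i<k. int (if parallel i j then m i else 0))"
    unfolding level_def by simp
  also have "\<dots> = int (\<Sum>i<k. if parallel i j then m i else 0)"
    by (rule of_nat_sum[symmetric])
  also have "\<dots> = 1" using m by (simp add: basis_label_def)
  finally show ?thesis .
qed

lemma level_later:
  assumes m: "basis_label m j" and c: "c < k" and later: "class_max j < class_max c"
  shows "level c m = 0"
  unfolding level_def
proof (rule sum.neutral, rule ballI)
  fix i assume "i \<in> {..<k}"
  then have i: "i < k" by simp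
  show "int (m i) * ratio c i = 0"
  proof (cases "m i = 0")
    case False
    then have "class_max i < class_max c" using m i later by (auto simp: basis_label_def)
    then have "\<not> parallel i c" and "\<not> class_max c < i"
      using class_max_eq_iff[OF i c] class_max(1)[OF i] by auto
    then show ?thesis by (simp add: ratio_def)
  qed simp
qed

lemma basis_label_generator:
  assumes j: "j < k"
  shows "basis_label (\<lambda>i. if i = j then 1 else 0) j"
proof -
  have "level c (\<lambda>i. if i = j then 1 else 0) = (\<Sum>i<k. if i = j then ratio c j else 0)" for c
    unfolding level_def by (rule sum.cong) auto
  then have level: "level c (\<lambda>i. if i = j then 1 else 0) = ratio c j" for c
    using j by simp
  have "ratio c j \<le> 0" if "c < k" "class_max c < class_max j" for c
    using that class_max_eq_iff[OF that(1) j] parallel_sym[OF j] by (auto simp: ratio_def)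
  moreover have "(\<Sum>i<k. if parallel i j then if i = j then 1 else 0 else 0) =
      (\<Sum>i<k. if i = j then 1 else 0 :: nat)"
    using parallel_refl by (intro sum.cong) auto
  ultimately show ?thesis
    unfolding basis_label_def level using j by auto
qed

text \<open>For \<open>c\<close> in the class of \<open>j\<close> the level becomes \<open>1 + level j m'\<close>, which is \<open>\<le> 0\<close>
  because \<open>level j m'\<close> is a nonzero, non-positive integer.\<close>
lemma level_add_nonpos:
  assumes m: "basis_label m j" and m': "basis_label m' j'"
    and earlier: "class_max j < class_max j'" and nz: "level j m' \<noteq> 0"
    and c: "c < k" "class_max c < class_max j'"
  shows "level c (\<lambda>i. m i + m' i) \<le> 0"
proof -
  have j: "j < k" using m by (simp add: basis_label_def)
  have "level c m' \<le> 0" using m' c by (simp add: basis_label_def)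
  consider "class_max c = class_max j" | "class_max c < class_max j" | "class_max j < class_max c"
    by linarith
  then show ?thesis
  proof cases
    case 1
    then have "parallel c j" using class_max_eq_iff[OF c(1) j] by simp
    then have "level c m = 1" and "level c m' = level j m'"
      using level_own[OF m c(1)] level_parallel[OF c(1) j] by simp_all
    then show ?thesis using \<open>level c m' \<le> 0\<close> nz by (simp add: level_add)
  next
    case 2
    then have "level c m \<le> 0" using m c(1) unfolding basis_label_def by blast
    then show ?thesis using \<open>level c m' \<le> 0\<close> by (simp add: level_add)
  next
    case 3
    then show ?thesis using level_later[OF m c(1)] \<open>level c m' \<le> 0\<close> by (simp add: level_add)
  qed
qed

lemma basis_label_add:
  assumes m: "basis_label m j" and m': "basis_label m' j'"
    and earlier: "class_max j < class_max j'" and nz: "level j m' \<noteq> 0"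
  shows "basis_label (\<lambda>i. m i + m' i) j'"
proof -
  have j': "j' < k" using m' by (simp add: basis_label_def)
  have m_below: "class_max i < class_max j'" if "i < k" "m i \<noteq> 0" for i
    using m that earlier by (fastforce simp: basis_label_def)
  have "(\<Sum>i<k. if parallel i j' then m i else 0) = 0"
    using m_below class_max_eq_iff[OF _ j'] by (intro sum.neutral) fastforce
  moreover have "(\<Sum>i<k. if parallel i j' then m i + m' i else 0) =
      (\<Sum>i<k. if parallel i j' then m i else 0) + (\<Sum>i<k. if parallel i j' then m' i else 0)"
    unfolding sum.distrib[symmetric] by (rule sum.cong) auto
  ultimately have "(\<Sum>i<k. if parallel i j' then m i + m' i else 0) = 1"
    using m' by (simp add: basis_label_def)
  moreover have "class_max i \<le> class_max j'" if "i < k" "m i + m' i \<noteq> 0" for i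
  proof (cases "m i = 0")
    case True
    then show ?thesis using m' that unfolding basis_label_def by simp
  qed (use m_below that in force)
  ultimately show ?thesis
    using m m' j' level_add_nonpos[OF m m' earlier nz] unfolding basis_label_def by simp
qed

definition root_bound :: nat where
  "root_bound = (\<Sum>c<k. \<Sum>i<k. root c i)"

lemma root_le_bound: "c < k \<Longrightarrow> i < k \<Longrightarrow> root c i \<le> root_bound"
  unfolding root_bound_def
  using member_le_sum[of i "{..<k}" "root c"] member_le_sum[of c "{..<k}" "\<lambda>c. \<Sum>i<k. root c i"]
  by simp

text \<open>A negative level forces a large tail: the only negative ratios \<open>ratio h i\<close> occur for
  \<open>i\<close> beyond the class of \<open>h\<close>.\<close>
lemma level_lower_bound:
  assumes h: "h < k"
  shows "int (m h) - int root_bound * int (\<Sum>i\<in>{Suc h..<k}. m i) \<le> level h m"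
proof -
  have "(if i = h then int (m h) else 0) - (if h < i then int root_bound * int (m i) else 0)
      \<le> int (m i) * ratio h i" if i: "i < k" for i
  proof (cases "i = h")
    case True
    then show ?thesis using parallel_refl[of h] by (simp add: ratio_def)
  next
    case False
    show ?thesis
    proof (cases "\<not> parallel i h \<and> class_max h < i")
      case True
      have "int (m i) * int (root (class_max h) i) \<le> int (m i) * int root_bound"
        using root_le_bound[OF class_max(2)[OF h] i] by (simp add: mult_left_mono)
      moreover have "h < i" using True class_max(1)[OF h] by simp
      ultimately show ?thesis using True False by (simp add: ratio_def mult.commute)
    next
      case not_root: False
      then have "0 \<le> int (m i) * ratio h i" by (auto simp: ratio_def)
      moreover have "(if i = h then int (m h) else 0) -
          (if h < i then int root_bound * int (m i) else 0) \<le> 0"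
        using False by simp
      ultimately show ?thesis by linarith
    qed
  qed
  then have "(\<Sum>i<k. (if i = h then int (m h) else 0) -
      (if h < i then int root_bound * int (m i) else 0)) \<le> level h m"
    unfolding level_def by (intro sum_mono) simp
  moreover have "(\<Sum>i<k. if h < i then int root_bound * int (m i) else 0) =
      int root_bound * int (\<Sum>i\<in>{Suc h..<k}. m i)"
  proof -
    have "{i \<in> {..<k}. h < i} = {Suc h..<k}" by auto
    then show ?thesis
      by (simp add: sum.inter_filter[symmetric] sum_distrib_left)
  qed
  ultimately show ?thesis using h by (simp add: sum_subtractf)
qed

lemma basis_label_entry_le:
  assumes m: "basis_label m j" and h: "h < k"
  shows "m h \<le> 1 + root_bound * (\<Sum>i\<in>{Suc h..<k}. m i)"
proof -
  have j: "j < k" using m by (simp add: basis_label_def)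
  consider "class_max h = class_max j" | "class_max j < class_max h" | "class_max h < class_max j"
    by linarith
  then show ?thesis
  proof cases
    case 1
    then have "m h \<le> (\<Sum>i<k. if parallel i j then m i else 0)"
      using class_max_eq_iff[OF h j] h
        member_le_sum[of h "{..<k}" "\<lambda>i. if parallel i j then m i else 0"]
      by simp
    then show ?thesis using m by (simp add: basis_label_def)
  next
    case 2
    then have "m h = 0" using m h by (auto simp: basis_label_def)
    then show ?thesis by simp
  next
    case 3
    then have "level h m \<le> 0" using m h unfolding basis_label_def by blast
    then have "int (m h) \<le> int root_bound * int (\<Sum>i\<in>{Suc h..<k}. m i)"
      using level_lower_bound[OF h, of m] by linarith
    then have "m h \<le> root_bound * (\<Sum>i\<in>{Suc h..<k}. m i)"
      by (metis of_nat_le_iff of_nat_mult)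
    then show ?thesis by simp
  qed
qed

lemma basis_label_tail_le:
  assumes m: "basis_label m j"
  shows "h \<le> k \<Longrightarrow> (\<Sum>i\<in>{h..<k}. m i) \<le> (root_bound + 2) ^ (k - h)"
proof (induction "k - h" arbitrary: h)
  case 0
  then show ?case by simp
next
  case (Suc d)
  then have h: "h < k" and d: "d = k - Suc h" by simp_all
  define T where "T = (\<Sum>i\<in>{Suc h..<k}. m i)"
  have "T \<le> (root_bound + 2) ^ d" using Suc.hyps(1)[OF d] h d unfolding T_def by simp
  then have IH: "(root_bound + 1) * T \<le> (root_bound + 1) * (root_bound + 2) ^ d"
    by (rule mult_le_mono2)
  have "(\<Sum>i\<in>{h..<k}. m i) = m h + T"
    unfolding T_def using h by (simp add: sum.atLeast_Suc_lessThan)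
  also have "\<dots> \<le> 1 + (root_bound + 1) * T"
    using basis_label_entry_le[OF m h] unfolding T_def by simp
  also have "\<dots> \<le> (root_bound + 1) * (root_bound + 2) ^ d + (root_bound + 2) ^ d"
    using IH one_le_power[of "root_bound + 2" d] by linarith
  also have "\<dots> = (root_bound + 2) ^ (k - h)"
    using Suc.hyps(2)[symmetric] by simp
  finally show ?case .
qed

lemma basis_label_entry_bounded:
  assumes m: "basis_label m j"
  shows "m i \<le> (root_bound + 2) ^ k"
proof (cases "i < k")
  case True
  have "m i \<le> (\<Sum>i\<in>{i..<k}. m i)" using True by (intro member_le_sum) auto
  also have "\<dots> \<le> (root_bound + 2) ^ (k - i)" using basis_label_tail_le[OF m] True by simp
  also have "\<dots> \<le> (root_bound + 2) ^ k" by (rule power_increasing) auto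
  finally show ?thesis .
qed (use m in \<open>simp add: basis_label_def\<close>)

lemma finite_basis_labels: "finite {(m, j). basis_label m j}"
proof (rule finite_subset)
  show "{(m, j). basis_label m j} \<subseteq>
      {m. \<forall>i. (i \<in> {..<k} \<longrightarrow> m i \<in> {..(root_bound + 2) ^ k}) \<and> (i \<notin> {..<k} \<longrightarrow> m i = 0)} \<times> {..<k}"
    using basis_label_entry_bounded by (auto simp: basis_label_def)
  show "finite ({m. \<forall>i. (i \<in> {..<k} \<longrightarrow> m i \<in> {..(root_bound + 2) ^ k}) \<and>
      (i \<notin> {..<k} \<longrightarrow> m i = 0)} \<times> {..<k})"
    using finite_set_of_finite_funs[of "{..<k}" "{..(root_bound + 2) ^ k}" 0] by simp
qed

definition basis :: "(('n, 'k) mpoly \<Rightarrow> ('n, 'k) mpoly) set" where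
  "basis = (\<lambda>(m, j). Delta (exponent m) (\<beta> j)) ` {(m, j). basis_label m j}"

lemma Delta_in_basis: "basis_label m j \<Longrightarrow> Delta (exponent m) (\<beta> j) \<in> basis"
  unfolding basis_def by force

lemma lie_bracket_basis_earlier_later:
  assumes m: "basis_label m j" and m': "basis_label m' j'" and earlier: "class_max j < class_max j'"
  shows "lie_bracket (Delta (exponent m) (\<beta> j)) (Delta (exponent m') (\<beta> j')) \<in> op.span basis"
proof -
  have j: "j < k" and j': "j' < k" using m m' by (simp_all add: basis_label_def)
  define x where "x = ip_nat (\<beta> j) (exponent m')"
  have "ip_nat (\<beta> j') (exponent m) = 0"
    using ip_exponent[OF j'] level_later[OF m j' earlier] by simp
  then have bracket: "lie_bracket (Delta (exponent m) (\<beta> j)) (Delta (exponent m') (\<beta> j')) =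
      Delta (exponent (\<lambda>i. m i + m' i)) (\<lambda>l. x * \<beta> j' l)"
    by (simp add: lie_bracket_Delta exponent_add x_def)
  show ?thesis
  proof (cases "level j m' = 0")
    case True
    then have "x = 0" using ip_exponent[OF j] by (simp add: x_def)
    then show ?thesis
      unfolding bracket using op.span_zero by (simp add: Delta_zero_weights zero_fun_def)
  next
    case False
    then have "basis_label (\<lambda>i. m i + m' i) j'" by (rule basis_label_add[OF m m' earlier])
    then have "op_scale x (Delta (exponent (\<lambda>i. m i + m' i)) (\<beta> j')) \<in> op.span basis"
      by (intro op.span_scale op.span_base Delta_in_basis)
    moreover have "op_scale x (Delta (exponent (\<lambda>i. m i + m' i)) (\<beta> j')) =
        Delta (exponent (\<lambda>i. m i + m' i)) (\<lambda>l. x * \<beta> j' l)"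
      by (simp add: fun_eq_iff op_scale_apply Delta_scale_weights)
    ultimately show ?thesis unfolding bracket by metis
  qed
qed

lemma lie_bracket_basis_same_class:
  assumes m: "basis_label m j" and m': "basis_label m' j'" and same: "class_max j = class_max j'"
  shows "lie_bracket (Delta (exponent m) (\<beta> j)) (Delta (exponent m') (\<beta> j')) = 0"
proof -
  have j: "j < k" and j': "j' < k" using m m' by (simp_all add: basis_label_def)
  have "parallel j j'" and "parallel j' j"
    using class_max_eq_iff[OF j j'] class_max_eq_iff[OF j' j] same by simp_all
  then have "ip_nat (\<beta> j) (exponent m') = self_ip j" and "ip_nat (\<beta> j') (exponent m) = self_ip j'"
    using ip_exponent[OF j] ip_exponent[OF j'] level_own[OF m' j] level_own[OF m j'] by simp_all
  moreover obtain \<mu> where "\<beta> j' = (\<lambda>l. \<mu> * \<beta> j l)" "self_ip j' = \<mu> * self_ip j"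
    using self_ip_parallel[OF j' \<open>parallel j' j\<close> j] .
  ultimately show ?thesis
    by (simp add: lie_bracket_Delta Delta_zero_weights zero_fun_def)
qed

lemma lie_bracket_basis:
  assumes "b \<in> basis" "b' \<in> basis"
  shows "lie_bracket b b' \<in> op.span basis"
proof -
  obtain m j m' j' where m: "basis_label m j" "b = Delta (exponent m) (\<beta> j)"
    and m': "basis_label m' j'" "b' = Delta (exponent m') (\<beta> j')"
    using assms unfolding basis_def by auto
  consider "class_max j = class_max j'" | "class_max j < class_max j'"
    | "class_max j' < class_max j"
    by linarith
  then show ?thesis
  proof cases
    case 1
    then show ?thesis
      using lie_bracket_basis_same_class[OF m(1) m'(1)] op.span_zero m(2) m'(2) by simp
  next
    case 2
    then show ?thesis
      using lie_bracket_basis_earlier_later[OF m(1) m'(1)] m(2) m'(2) by simp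
  next
    case 3
    then have "lie_bracket b' b \<in> op.span basis"
      using lie_bracket_basis_earlier_later[OF m'(1) m(1)] m(2) m'(2) by simp
    then show ?thesis
      using op.span_neg lie_bracket_antisym[of b b'] by metis
  qed
qed

theorem fin_dim_lie_gen: "fin_dim (lie_gen {Delta (p i) (\<beta> i) | i. i < k})"
  unfolding fin_dim_iff_span
proof (intro exI conjI)
  show "finite basis"
    unfolding basis_def using finite_basis_labels by simp
  have "Delta (p i) (\<beta> i) \<in> basis" if "i < k" for i
    using Delta_in_basis[OF basis_label_generator[OF that]] exponent_unit[OF that] by simp
  then show "lie_gen {Delta (p i) (\<beta> i) | i. i < k} \<subseteq> op.span basis"
    using lie_bracket_basis linear_op_Delta
    by (intro lie_gen_subset_span) (auto simp: basis_def intro: op.span_base)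
qed

end

definition admissible_order ::
    "nat \<Rightarrow> (nat \<Rightarrow> 'n::finite \<Rightarrow> nat) \<Rightarrow> (nat \<Rightarrow> 'n \<Rightarrow> 'k::field) \<Rightarrow> (nat \<Rightarrow> nat) \<Rightarrow> bool" where
  "admissible_order k p \<beta> \<sigma> \<longleftrightarrow> bij_betw \<sigma> {..<k} {..<k} \<and>
      (\<forall>i<k. \<forall>j<k. proportional (\<beta> (\<sigma> i)) (\<beta> (\<sigma> j)) \<longrightarrow>
          ip (\<beta> (\<sigma> i)) (\<lambda>l. int (p (\<sigma> i) l) - int (p (\<sigma> j) l)) = 0) \<and>
      (\<forall>i<k. \<forall>j<k. \<not> proportional (\<beta> (\<sigma> i)) (\<beta> (\<sigma> j)) \<and> i < j \<longrightarrow>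
          ip (\<beta> (\<sigma> j)) (\<lambda>l. int (p (\<sigma> i) l)) = 0 \<and>
          (\<exists>r::nat. ip (\<beta> (\<sigma> i)) (\<lambda>l. int (p (\<sigma> j) l) + int r * int (p (\<sigma> i) l)) = 0))"

lemma ip_of_nat: "ip v (\<lambda>l. int (a l)) = ip_nat v a"
  by (simp add: ip_def ip_nat_def)

lemma ip_of_nat_diff: "ip v (\<lambda>l. int (a l) - int (b l)) = ip_nat v a - ip_nat v b"
  by (simp add: ip_def ip_nat_def right_diff_distrib sum_subtractf)

lemma ip_of_nat_add_mult:
  "ip v (\<lambda>l. int (a l) + int r * int (b l)) = ip_nat v a + of_nat r * ip_nat v b"
  by (simp add: ip_def ip_nat_def distrib_left sum.distrib sum_distrib_left mult_ac)

lemma admissible_family_reorder: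
  assumes nz: "\<forall>i<k. \<beta> i \<noteq> (\<lambda>_. 0)" and ord: "admissible_order k p \<beta> \<sigma>"
  shows "admissible_family k (\<lambda>i. p (\<sigma> i)) (\<lambda>i. \<beta> (\<sigma> i))"
proof
  have \<sigma>: "\<sigma> i < k" if "i < k" for i
    using ord that unfolding admissible_order_def bij_betw_def by auto
  show "\<beta> (\<sigma> i) \<noteq> (\<lambda>_. 0)" if "i < k" for i
    using nz \<sigma>[OF that] by blast
  show "ip_nat (\<beta> (\<sigma> i)) (p (\<sigma> i)) = ip_nat (\<beta> (\<sigma> i)) (p (\<sigma> j))"
    if "i < k" "j < k" "proportional (\<beta> (\<sigma> i)) (\<beta> (\<sigma> j))" for i j
    using ord that unfolding admissible_order_def ip_of_nat_diff by simp
  show "ip_nat (\<beta> (\<sigma> j)) (p (\<sigma> i)) = 0"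
    if "i < j" "j < k" "\<not> proportional (\<beta> (\<sigma> i)) (\<beta> (\<sigma> j))" for i j
    using ord that unfolding admissible_order_def ip_of_nat by simp
  show "\<exists>r. ip_nat (\<beta> (\<sigma> i)) (p (\<sigma> j)) + of_nat r * ip_nat (\<beta> (\<sigma> i)) (p (\<sigma> i)) = 0"
    if "i < j" "j < k" "\<not> proportional (\<beta> (\<sigma> i)) (\<beta> (\<sigma> j))" for i j
    using ord that unfolding admissible_order_def ip_of_nat_add_mult by simp
qed

lemma generators_reorder:
  assumes "bij_betw \<sigma> {..<k} {..<k}"
  shows "{Delta (p (\<sigma> i)) (\<beta> (\<sigma> i)) | i. i < k} = {Delta (p i) (\<beta> i) | i. i < k}"
proof -
  have "{Delta (p (\<sigma> i)) (\<beta> (\<sigma> i)) | i. i < k} = (\<lambda>i. Delta (p i) (\<beta> i)) ` \<sigma> ` {..<k}"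
    by auto
  also have "\<sigma> ` {..<k} = {..<k}" using assms by (simp add: bij_betw_def)
  finally show ?thesis by auto
qed

section \<open>Necessity\<close>

definition closed_walk :: "('a \<Rightarrow> 'a \<Rightarrow> bool) \<Rightarrow> (nat \<Rightarrow> 'a) \<Rightarrow> nat \<Rightarrow> bool" where
  "closed_walk E f n \<longleftrightarrow> 0 < n \<and> f n = f 0 \<and> (\<forall>i<n. E (f i) (f (Suc i)))"

lemma closed_walk_chord:
  assumes walk: "closed_walk E f n" and ij: "i < j" "j < n" and chord: "E (f j) (f i)"
  shows "closed_walk E (\<lambda>t. if t \<le> j - i then f (i + t) else f i) (Suc (j - i))"
  unfolding closed_walk_def
proof (intro conjI allI impI)
  fix t assume t: "t < Suc (j - i)"
  show "E (if t \<le> j - i then f (i + t) else f i) (if Suc t \<le> j - i then f (i + Suc t) else f i)"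
  proof (cases "t < j - i")
    case True
    then show ?thesis using walk ij by (simp add: closed_walk_def)
  next
    case False
    then have "t = j - i" using t by simp
    then show ?thesis using chord ij by simp
  qed
qed simp_all

lemma closed_walk_shortcut:
  assumes walk: "closed_walk E f n" and n: "3 \<le> n"
    and into: "E (f (n - 1)) y" and out: "E y (f 2)"
  shows "closed_walk E (\<lambda>t. if t = 0 \<or> t = n - 1 then y else f (Suc t)) (n - 1)"
  unfolding closed_walk_def
proof (intro conjI allI impI)
  fix t assume t: "t < n - 1"
  consider "t = 0" | "Suc t = n - 1" | "0 < t" "Suc t < n - 1" using t by linarith
  then show "E (if t = 0 \<or> t = n - 1 then y else f (Suc t))
      (if Suc t = 0 \<or> Suc t = n - 1 then y else f (Suc (Suc t)))"
  proof cases
    case 1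
    moreover have "Suc 0 \<noteq> n - 1" using n by simp
    ultimately show ?thesis using out by (simp add: numeral_2_eq_2)
  next
    case 2
    moreover have "t \<noteq> 0" using 2 n by simp
    ultimately show ?thesis using into by simp
  next
    case 3
    then show ?thesis using walk by (simp add: closed_walk_def)
  qed
qed (use n in simp_all)

lemma acyclic_numbering:
  fixes R :: "nat rel"
  assumes acyc: "acyclic R" and R: "R \<subseteq> {..<k} \<times> {..<k}"
  obtains \<sigma> where "bij_betw \<sigma> {..<k} {..<k}"
    and "\<And>i j. i < k \<Longrightarrow> j < k \<Longrightarrow> (\<sigma> i, \<sigma> j) \<in> R \<Longrightarrow> i < j"
proof -
  define depth where "depth x = card {y. (y, x) \<in> R\<^sup>+}" for x
  have depth_less: "depth x < depth y" if xy: "(x, y) \<in> R" for x y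
  proof -
    have "R\<^sup>+ \<subseteq> {..<k} \<times> {..<k}" using R by (rule trancl_subset_Sigma)
    then have "{z. (z, y) \<in> R\<^sup>+} \<subseteq> {..<k}" by blast
    then have "finite {z. (z, y) \<in> R\<^sup>+}" by (rule finite_subset) simp
    moreover have "{z. (z, x) \<in> R\<^sup>+} \<subset> {z. (z, y) \<in> R\<^sup>+}"
      using xy acyc unfolding acyclic_def by (auto intro: trancl_into_trancl)
    ultimately show ?thesis unfolding depth_def by (rule psubset_card_mono)
  qed
  define xs where "xs = sort_key depth [0..<k]"
  have xs: "distinct xs" "set xs = {..<k}" "length xs = k" "sorted (map depth xs)"
    unfolding xs_def by auto
  have "bij_betw (\<lambda>i. xs ! i) {..<k} {..<k}"
    using bij_betw_nth[OF xs(1)] xs(2,3) by (simp add: lessThan_atLeast0)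
  moreover have "i < j" if "i < k" "j < k" "(xs ! i, xs ! j) \<in> R" for i j
  proof (rule ccontr)
    assume "\<not> i < j"
    then have "depth (xs ! j) \<le> depth (xs ! i)"
      using sorted_nth_mono[OF xs(4), of j i] that xs(3) by simp
    then show False using depth_less[OF that(3)] by simp
  qed
  ultimately show ?thesis using that by blast
qed

definition total_degree :: "('n::finite \<Rightarrow> nat) \<Rightarrow> nat" where
  "total_degree a = (\<Sum>l\<in>UNIV. a l)"

lemma total_degree_add: "total_degree (\<lambda>l. a l + b l) = total_degree a + total_degree b"
  by (simp add: total_degree_def sum.distrib)

inductive_set iterated_brackets ::
    "nat \<Rightarrow> (nat \<Rightarrow> 'n::finite \<Rightarrow> nat) \<Rightarrow> (nat \<Rightarrow> 'n \<Rightarrow> 'k::comm_ring_1) \<Rightarrow> (('n \<Rightarrow> nat) \<times> ('n \<Rightarrow> 'k)) set"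
  for k p \<beta> where
    generator: "i < k \<Longrightarrow> (p i, \<beta> i) \<in> iterated_brackets k p \<beta>"
  | bracket: "(a, v) \<in> iterated_brackets k p \<beta> \<Longrightarrow> (b, w) \<in> iterated_brackets k p \<beta> \<Longrightarrow>
      ((\<lambda>l. a l + b l), (\<lambda>l. ip_nat v b * w l - ip_nat w a * v l)) \<in> iterated_brackets k p \<beta>"

lemma Delta_iterated_brackets:
  assumes "(a, v) \<in> iterated_brackets k p \<beta>"
  shows "Delta a v \<in> lie_gen {Delta (p i) (\<beta> i) | i. i < k}"
  using assms
proof (induction rule: iterated_brackets.induct)
  case (generator i)
  then show ?case by (blast intro: lie_gen.base)
next
  case (bracket a v b w)
  then show ?case using lie_gen.bracket[OF bracket.IH] by (simp add: lie_bracket_Delta)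
qed

lemma total_degree_iterated_brackets:
  assumes pos: "\<forall>i<k. p i \<noteq> (\<lambda>_. 0)" and "(a, v) \<in> iterated_brackets k p \<beta>"
  shows "1 \<le> total_degree a"
  using assms(2)
proof (induction rule: iterated_brackets.induct)
  case (generator i)
  then obtain l where "p i l \<noteq> 0" using pos by auto
  moreover have "p i l \<le> total_degree (p i)" unfolding total_degree_def by (rule member_le_sum) auto
  ultimately show ?case by simp
qed (simp add: total_degree_add)

lemma ad_power_iterated_brackets:
  fixes \<beta> :: "nat \<Rightarrow> 'n::finite \<Rightarrow> 'k::field"
  assumes Y: "(a, v) \<in> iterated_brackets k p \<beta>" and Z: "(b, w) \<in> iterated_brackets k p \<beta>"
    and no_root: "\<nexists>r::nat. ip_nat v b + of_nat r * ip_nat v a = 0"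
  shows "\<exists>s t. s \<noteq> 0 \<and> ((\<lambda>l. b l + m * a l), (\<lambda>l. s * w l + t * v l)) \<in> iterated_brackets k p \<beta>"
proof (induction m)
  case 0
  have "((\<lambda>l. b l + 0 * a l), (\<lambda>l. 1 * w l + 0 * v l)) = (b, w)" by simp
  then show ?case using Z by (intro exI[of _ 1] exI[of _ 0]) simp
next
  case (Suc m)
  then obtain s t where st: "s \<noteq> 0"
      "((\<lambda>l. b l + m * a l), (\<lambda>l. s * w l + t * v l)) \<in> iterated_brackets k p \<beta>"
    by blast
  let ?d = "\<lambda>l. b l + m * a l" and ?u = "\<lambda>l. s * w l + t * v l"
  have new: "((\<lambda>l. a l + ?d l), (\<lambda>l. ip_nat v ?d * ?u l - ip_nat ?u a * v l))
      \<in> iterated_brackets k p \<beta>"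
    by (rule iterated_brackets.bracket[OF Y st(2)])
  have "ip_nat v ?d = ip_nat v b + of_nat m * ip_nat v a"
    by (simp add: ip_nat_def sum.distrib distrib_left sum_distrib_left mult_ac)
  then have "ip_nat v ?d \<noteq> 0" using no_root by metis
  moreover have "(\<lambda>l. a l + ?d l) = (\<lambda>l. b l + Suc m * a l)" by (simp add: fun_eq_iff)
  moreover have "(\<lambda>l. ip_nat v ?d * ?u l - ip_nat ?u a * v l) =
      (\<lambda>l. (ip_nat v ?d * s) * w l + (ip_nat v ?d * t - ip_nat ?u a) * v l)"
    by (simp add: fun_eq_iff algebra_simps)
  ultimately show ?case using new st(1)
    by (intro exI[of _ "ip_nat v ?d * s"] exI[of _ "ip_nat v ?d * t - ip_nat ?u a"]) simp
qed

lemma iterated_brackets_proportional: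
  fixes \<beta> :: "nat \<Rightarrow> 'n::finite \<Rightarrow> 'k::field"
  assumes "(a, (\<lambda>l. y * v l)) \<in> iterated_brackets k p \<beta>"
    and "(d, (\<lambda>l. x * v l)) \<in> iterated_brackets k p \<beta>"
  shows "((\<lambda>l. a l + d l), (\<lambda>l. (x * y * (ip_nat v d - ip_nat v a)) * v l))
    \<in> iterated_brackets k p \<beta>"
proof -
  have "(\<lambda>l. ip_nat (\<lambda>l. y * v l) d * (x * v l) - ip_nat (\<lambda>l. x * v l) a * (y * v l)) =
      (\<lambda>l. (x * y * (ip_nat v d - ip_nat v a)) * v l)"
    by (simp add: fun_eq_iff ip_nat_scale algebra_simps)
  then show ?thesis using iterated_brackets.bracket[OF assms] by simp
qed

lemma proportional_brackets_degree_unbounded: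
  fixes \<beta> :: "nat \<Rightarrow> 'n::finite \<Rightarrow> 'k::field"
  assumes pos: "\<forall>i<k. p i \<noteq> (\<lambda>_. 0)"
    and Y: "(a, v) \<in> iterated_brackets k p \<beta>" and Z: "(b, (\<lambda>l. c * v l)) \<in> iterated_brackets k p \<beta>"
    and c: "c \<noteq> 0" and ne: "ip_nat v a \<noteq> ip_nat v b"
  shows "\<exists>d x. x \<noteq> 0 \<and> (d, (\<lambda>l. x * v l)) \<in> iterated_brackets k p \<beta> \<and> n \<le> total_degree d"
proof (induction n)
  case 0
  have "(\<lambda>l. 1 * v l) = v" by simp
  then show ?case using Y by (intro exI[of _ a] exI[of _ 1]) simp
next
  case (Suc n)
  then obtain d x where dx: "x \<noteq> 0" "(d, (\<lambda>l. x * v l)) \<in> iterated_brackets k p \<beta>"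
    "n \<le> total_degree d"
    by blast
  have Y': "(a, (\<lambda>l. 1 * v l)) \<in> iterated_brackets k p \<beta>" using Y by simp
  obtain e y where "y \<noteq> 0" "(e, (\<lambda>l. y * v l)) \<in> iterated_brackets k p \<beta>"
    and "e = (\<lambda>l. a l + d l) \<or> e = (\<lambda>l. b l + d l)"
  proof (cases "ip_nat v d = ip_nat v a")
    case False
    then show ?thesis
      using iterated_brackets_proportional[OF Y' dx(2)] dx(1)
      by (intro that[of "x * 1 * (ip_nat v d - ip_nat v a)" "\<lambda>l. a l + d l"]) simp_all
  next
    case True
    then show ?thesis
      using iterated_brackets_proportional[OF Z dx(2)] dx(1) c ne
      by (intro that[of "x * c * (ip_nat v d - ip_nat v b)" "\<lambda>l. b l + d l"]) simp_all
  qed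
  moreover have "1 \<le> total_degree a" "1 \<le> total_degree b"
    using total_degree_iterated_brackets[OF pos] Y Z by blast+
  ultimately show ?case
    using dx(3) by (intro exI[of _ e] exI[of _ y]) (auto simp: total_degree_add)
qed

locale finite_exponents =
  fixes k :: nat and p :: "nat \<Rightarrow> 'n::finite \<Rightarrow> nat" and \<beta> :: "nat \<Rightarrow> 'n \<Rightarrow> 'k::field_char_0"
  assumes weights_nonzero: "\<forall>i<k. \<beta> i \<noteq> (\<lambda>_. 0)"
    and positive_weight: "\<forall>i<k. p i \<noteq> (\<lambda>_. 0)"
    and finite_exponents: "finite {a. \<exists>v. (a, v) \<in> iterated_brackets k p \<beta> \<and> v \<noteq> (\<lambda>_. 0)}"
begin

abbreviation T where "T \<equiv> iterated_brackets k p \<beta>"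

lemma total_degree_bounded:
  obtains N where "\<And>a v. (a, v) \<in> T \<Longrightarrow> v \<noteq> (\<lambda>_. 0) \<Longrightarrow> total_degree a < N"
proof
  fix a v assume "(a, v) \<in> T" "v \<noteq> (\<lambda>_. 0)"
  then have "total_degree a \<le> Max (total_degree ` {a. \<exists>v. (a, v) \<in> T \<and> v \<noteq> (\<lambda>_. 0)})"
    using finite_exponents by (intro Max_ge) auto
  then show "total_degree a < Suc (Max (total_degree ` {a. \<exists>v. (a, v) \<in> T \<and> v \<noteq> (\<lambda>_. 0)}))"
    by simp
qed

text \<open>Otherwise the iterated brackets \<open>ad(\<Delta>\<^sup>a\<^sub>v)\<^sup>m \<Delta>\<^sup>b\<^sub>w\<close> would all be nonzero, with
  exponents \<open>b + m a\<close> of unbounded degree.\<close>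
lemma ip_root_exists:
  assumes Y: "(a, v) \<in> T" and Z: "(b, w) \<in> T" and np: "\<not> proportional w v"
  shows "\<exists>r::nat. ip_nat v b + of_nat r * ip_nat v a = 0"
proof (rule ccontr)
  assume no_root: "\<nexists>r::nat. ip_nat v b + of_nat r * ip_nat v a = 0"
  have iterate: "\<exists>s t. s \<noteq> 0 \<and> ((\<lambda>l. b l + m * a l), (\<lambda>l. s * w l + t * v l)) \<in> T" for m
    using ad_power_iterated_brackets[OF Y Z] no_root by blast
  obtain N where N: "\<And>a v. (a, v) \<in> T \<Longrightarrow> v \<noteq> (\<lambda>_. 0) \<Longrightarrow> total_degree a < N"
    using total_degree_bounded by blast
  obtain s t where "s \<noteq> 0" "((\<lambda>l. b l + N * a l), (\<lambda>l. s * w l + t * v l)) \<in> T"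
    using iterate by blast
  then have "total_degree (\<lambda>l. b l + N * a l) < N"
    using N combination_nonzero[OF np] by blast
  moreover have "total_degree (\<lambda>l. b l + N * a l) = total_degree b + N * total_degree a"
    by (simp add: total_degree_def sum.distrib sum_distrib_left)
  moreover have "1 \<le> total_degree a"
    using total_degree_iterated_brackets[OF positive_weight Y] .
  moreover have "N \<le> N * total_degree a"
    using mult_le_mono2[OF \<open>1 \<le> total_degree a\<close>, of N] by simp
  ultimately show False by linarith
qed

text \<open>Otherwise bracketing alternately with \<open>\<Delta>\<^sup>a\<^sub>v\<close> and \<open>\<Delta>\<^sup>b\<^sub>c\<^sub>v\<close> produces nonzero
  multiples of \<open>v\<close> with exponents of unbounded degree.\<close>
lemma ip_eq_if_proportional:
  assumes Y: "(a, v) \<in> T" and Z: "(b, (\<lambda>l. c * v l)) \<in> T" and v: "v \<noteq> (\<lambda>_. 0)" and c: "c \<noteq> 0"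
  shows "ip_nat v a = ip_nat v b"
proof (rule ccontr)
  assume ne: "ip_nat v a \<noteq> ip_nat v b"
  have grow: "\<exists>d x. x \<noteq> 0 \<and> (d, (\<lambda>l. x * v l)) \<in> T \<and> n \<le> total_degree d" for n
    using proportional_brackets_degree_unbounded[OF positive_weight Y Z c ne] .
  obtain N where N: "\<And>a v. (a, v) \<in> T \<Longrightarrow> v \<noteq> (\<lambda>_. 0) \<Longrightarrow> total_degree a < N"
    using total_degree_bounded by blast
  obtain d x where "x \<noteq> 0" "(d, (\<lambda>l. x * v l)) \<in> T" "N \<le> total_degree d"
    using grow by blast
  moreover have "(\<lambda>l. x * v l) \<noteq> (\<lambda>_. 0)" if "x \<noteq> 0"
    using v that by (auto simp: fun_eq_iff)
  ultimately show False using N by fastforce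
qed

text \<open>Write \<open>\<langle>v, b\<rangle> = -r A\<close> and \<open>\<langle>w, a\<rangle> = -s B\<close> with \<open>A = \<langle>v, a\<rangle>\<close>, \<open>B = \<langle>w, b\<rangle>\<close>.
  Applying \<open>ip_root_exists\<close> to the bracket of the two elements and each of them
  yields \<open>s < r\<close> and \<open>r < s\<close>.\<close>
lemma ip_not_both_nonzero:
  assumes Y: "(a, v) \<in> T" and Z: "(b, w) \<in> T" and v: "v \<noteq> (\<lambda>_. 0)" and w: "w \<noteq> (\<lambda>_. 0)"
    and np: "\<not> proportional w v" and vb: "ip_nat v b \<noteq> 0" and wa: "ip_nat w a \<noteq> 0"
  shows False
proof -
  have np': "\<not> proportional v w" using proportional_sym np v by blast
  obtain r :: nat where r: "ip_nat v b + of_nat r * ip_nat v a = 0"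
    using ip_root_exists[OF Y Z np] by blast
  obtain s :: nat where s: "ip_nat w a + of_nat s * ip_nat w b = 0"
    using ip_root_exists[OF Z Y np'] by blast
  define A B where "A = ip_nat v a" and "B = ip_nat w b"
  have vb_eq: "ip_nat v b = - (of_nat r * A)" and wa_eq: "ip_nat w a = - (of_nat s * B)"
    using r s unfolding A_def B_def by (simp_all add: eq_neg_iff_add_eq_0)
  have "A \<noteq> 0" "B \<noteq> 0" "r \<noteq> 0" "s \<noteq> 0" using vb wa vb_eq wa_eq by auto
  define u where "u = (\<lambda>l. ip_nat v b * w l - ip_nat w a * v l)"
  have U: "((\<lambda>l. a l + b l), u) \<in> T" unfolding u_def by (rule iterated_brackets.bracket[OF Y Z])
  have ip_u: "ip_nat u x = ip_nat v b * ip_nat w x - ip_nat w a * ip_nat v x" for x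
    unfolding u_def by (rule ip_nat_diff)
  have ua: "ip_nat u a = A * B * (of_nat r * of_nat s + of_nat s)"
    unfolding ip_u vb_eq wa_eq A_def[symmetric] B_def[symmetric] by (simp add: algebra_simps)
  have ub: "ip_nat u b = - (A * B * (of_nat r + of_nat r * of_nat s))"
    unfolding ip_u vb_eq wa_eq A_def[symmetric] B_def[symmetric] by (simp add: algebra_simps)
  have npvu: "\<not> proportional v u" and npwu: "\<not> proportional w u"
    unfolding u_def using bracket_weight_not_proportional[OF np v w vb wa] by simp_all
  obtain t1 :: nat where "ip_nat u a + of_nat t1 * ip_nat u (\<lambda>l. a l + b l) = 0"
    using ip_root_exists[OF U Y npvu] by blast
  then have "A * B * (of_nat (r * s + s + t1 * s) - of_nat (t1 * r)) = 0"
    unfolding ip_nat_add ua ub by (simp add: algebra_simps)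
  then have "r * s + s + t1 * s = t1 * r"
    using \<open>A \<noteq> 0\<close> \<open>B \<noteq> 0\<close> by (simp del: of_nat_add of_nat_mult)
  then have "t1 * s < t1 * r" using \<open>s \<noteq> 0\<close> by linarith
  then have "s < r" by simp
  obtain t2 :: nat where "ip_nat u b + of_nat t2 * ip_nat u (\<lambda>l. a l + b l) = 0"
    using ip_root_exists[OF U Z npwu] by blast
  then have "A * B * (of_nat (t2 * s) - of_nat (r + r * s + t2 * r)) = 0"
    unfolding ip_nat_add ua ub by (simp add: algebra_simps)
  then have "t2 * s = r + r * s + t2 * r"
    using \<open>A \<noteq> 0\<close> \<open>B \<noteq> 0\<close> by (simp del: of_nat_add of_nat_mult)
  then have "t2 * r < t2 * s" using \<open>r \<noteq> 0\<close> by linarith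
  then have "r < s" by simp
  with \<open>s < r\<close> show False by simp
qed

text \<open>An admissible numbering must list \<open>x\<close> before \<open>y\<close> whenever \<open>edge x y\<close>.\<close>
definition edge :: "(('n \<Rightarrow> nat) \<times> ('n \<Rightarrow> 'k)) \<Rightarrow> (('n \<Rightarrow> nat) \<times> ('n \<Rightarrow> 'k)) \<Rightarrow> bool" where
  "edge x y \<longleftrightarrow> x \<in> T \<and> y \<in> T \<and> snd x \<noteq> (\<lambda>_. 0) \<and> snd y \<noteq> (\<lambda>_. 0) \<and>
     \<not> proportional (snd x) (snd y) \<and> ip_nat (snd x) (fst y) \<noteq> 0"

lemma edge_not_proportional: "edge x y \<Longrightarrow> \<not> proportional (snd y) (snd x)"
  unfolding edge_def using proportional_sym by blast

lemma no_edge_ip_zero: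
  assumes "x \<in> T" "y \<in> T" "snd x \<noteq> (\<lambda>_. 0)" "snd y \<noteq> (\<lambda>_. 0)"
    and "\<not> proportional (snd x) (snd y)" "\<not> edge x y"
  shows "ip_nat (snd x) (fst y) = 0"
  using assms unfolding edge_def by blast

lemma no_two_cycle: "edge x y \<Longrightarrow> \<not> edge y x"
  using ip_not_both_nonzero[of "fst x" "snd x" "fst y" "snd y"] edge_not_proportional
  unfolding edge_def by auto

lemma edge_source_scale:
  assumes "edge y z" "x \<in> T" "snd x = (\<lambda>l. c * snd y l)" "c \<noteq> 0"
  shows "edge x z"
proof -
  have "snd x \<noteq> (\<lambda>_. 0)" using assms unfolding edge_def by (auto simp: fun_eq_iff)
  then show ?thesis
    using assms unfolding edge_def by (simp add: proportional_scale_left ip_nat_scale)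
qed

lemma edge_shortcut:
  assumes xy: "edge x y" and yz: "edge y z" and ux: "edge u x"
    and not_yx: "\<not> edge y x" and not_uy: "\<not> edge u y"
    and np: "\<not> proportional (snd u) (snd y)"
  obtains w where "edge w z" "edge u w"
proof -
  have x: "(fst x, snd x) \<in> T" and y: "(fst y, snd y) \<in> T"
    using xy unfolding edge_def by simp_all
  define c where "c = ip_nat (snd x) (fst y)"
  have c: "c \<noteq> 0" using xy unfolding edge_def c_def by simp
  have "ip_nat (snd y) (fst x) = 0"
    using no_edge_ip_zero[OF _ _ _ _ edge_not_proportional[OF xy] not_yx] xy
    unfolding edge_def by simp
  then have w: "((\<lambda>l. fst x l + fst y l), (\<lambda>l. c * snd y l)) \<in> T"
    using iterated_brackets.bracket[OF x y] unfolding c_def by simp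
  show ?thesis
  proof
    show "edge ((\<lambda>l. fst x l + fst y l), (\<lambda>l. c * snd y l)) z"
      using edge_source_scale[OF yz w] c by simp
    have "ip_nat (snd u) (fst y) = 0"
      using no_edge_ip_zero[OF _ _ _ _ np not_uy] ux xy unfolding edge_def by simp
    then have "ip_nat (snd u) (\<lambda>l. fst x l + fst y l) \<noteq> 0"
      using ux unfolding edge_def by (simp add: ip_nat_add)
    moreover have "(\<lambda>l. c * snd y l) \<noteq> (\<lambda>_. 0)"
      using xy c unfolding edge_def by (auto simp: fun_eq_iff)
    ultimately show "edge u ((\<lambda>l. fst x l + fst y l), (\<lambda>l. c * snd y l))"
      using ux w np c unfolding edge_def by (simp add: proportional_scale_right)
  qed
qed

lemma chordless_closed_walk_shorten:
  assumes walk: "closed_walk edge f n" and n: "3 \<le> n"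
    and chordless: "\<And>i j. i < j \<Longrightarrow> j < n \<Longrightarrow> Suc (j - i) < n \<Longrightarrow> \<not> edge (f j) (f i)"
  obtains g where "closed_walk edge g (n - 1)"
proof -
  have step: "edge (f i) (f (Suc i))" if "i < n" for i
    using walk that by (simp add: closed_walk_def)
  have e01: "edge (f 0) (f 1)" and e12: "edge (f 1) (f 2)"
    using step[of 0] step[of 1] n by (simp_all add: numeral_2_eq_2)
  have closing: "edge (f (n - 1)) (f 0)"
    using step[of "n - 1"] walk n by (simp add: closed_walk_def)
  have "\<not> edge (f 1) (f 0)" "\<not> edge (f (n - 1)) (f 1)"
    using chordless[of 0 1] chordless[of 1 "n - 1"] n by simp_all
  moreover have "\<not> proportional (snd (f (n - 1))) (snd (f 1))"
  proof (cases "n = 3")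
    case True
    then show ?thesis using edge_not_proportional[OF e12] by (simp add: numeral_2_eq_2)
  next
    case False
    show ?thesis
    proof
      assume "proportional (snd (f (n - 1))) (snd (f 1))"
      then obtain c where c: "c \<noteq> 0" "snd (f (n - 1)) = (\<lambda>l. c * snd (f 1) l)"
        using proportional_nonzero_factor closing unfolding edge_def by blast
      have "f (n - 1) \<in> T" using closing unfolding edge_def by simp
      then have "edge (f (n - 1)) (f 2)"
        using edge_source_scale[OF e12 _ c(2,1)] by simp
      moreover have "2 < n - 1" "n - 1 < n" "Suc (n - 1 - 2) < n" using n False by auto
      ultimately show False using chordless by blast
    qed
  qed
  ultimately obtain y where "edge (f (n - 1)) y" "edge y (f 2)"
    using edge_shortcut[OF e01 e12 closing] by blast
  then show ?thesis
    using closed_walk_shortcut[OF walk n] that by blast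
qed

text \<open>A shortest closed walk has no chords, so by \<open>chordless_closed_walk_shorten\<close> it has
  length at most 2; such walks are excluded by \<open>no_two_cycle\<close>.\<close>
lemma no_closed_walk: "\<not> closed_walk edge f n"
proof (induction n arbitrary: f rule: less_induct)
  case (less n)
  show ?case
  proof
    assume walk: "closed_walk edge f n"
    have step: "edge (f i) (f (Suc i))" if "i < n" for i
      using walk that by (simp add: closed_walk_def)
    have closing: "edge (f (n - 1)) (f 0)"
      using step[of "n - 1"] walk by (simp add: closed_walk_def)
    consider "n = 1" | "n = 2" | "3 \<le> n" using walk by (force simp: closed_walk_def)
    then show False
    proof cases
      case 1
      then show False using closing by (simp add: edge_def proportional_refl)
    next
      case 2
      then show False using step[of 0] closing no_two_cycle by simp
    next
      case 3
      have "\<not> edge (f j) (f i)" if "i < j" "j < n" "Suc (j - i) < n" for i j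
        using closed_walk_chord[OF walk that(1,2)] less.IH[OF that(3)] by blast
      then obtain g where "closed_walk edge g (n - 1)"
        using chordless_closed_walk_shorten[OF walk 3] by blast
      moreover have "n - 1 < n" using 3 by simp
      ultimately show False using less.IH by blast
    qed
  qed
qed

lemma acyclic_generator_edges:
  "acyclic {(i, j). i < k \<and> j < k \<and> edge (p i, \<beta> i) (p j, \<beta> j)}" (is "acyclic ?R")
  unfolding acyclic_def
proof (intro allI notI)
  fix i assume "(i, i) \<in> ?R\<^sup>+"
  then obtain n where "0 < n" "(i, i) \<in> ?R ^^ n" by (auto simp: trancl_power)
  then obtain f where "f 0 = i" "f n = i" "\<forall>t<n. (f t, f (Suc t)) \<in> ?R"
    by (auto simp: relpow_fun_conv)
  then have "closed_walk edge (\<lambda>t. (p (f t), \<beta> (f t))) n"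
    using \<open>0 < n\<close> unfolding closed_walk_def by auto
  then show False using no_closed_walk by blast
qed

lemma admissible_order_exists: "\<exists>\<sigma>. admissible_order k p \<beta> \<sigma>"
proof -
  define R where "R = {(i, j). i < k \<and> j < k \<and> edge (p i, \<beta> i) (p j, \<beta> j)}"
  have "acyclic R" unfolding R_def by (rule acyclic_generator_edges)
  moreover have "R \<subseteq> {..<k} \<times> {..<k}" unfolding R_def by auto
  ultimately obtain \<sigma> where bij: "bij_betw \<sigma> {..<k} {..<k}"
    and forward: "\<And>i j. i < k \<Longrightarrow> j < k \<Longrightarrow> (\<sigma> i, \<sigma> j) \<in> R \<Longrightarrow> i < j"
    using acyclic_numbering by blast
  have \<sigma>: "\<sigma> i < k" if "i < k" for i using bij that unfolding bij_betw_def by auto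
  have gen: "(p (\<sigma> i), \<beta> (\<sigma> i)) \<in> T" and nz: "\<beta> (\<sigma> i) \<noteq> (\<lambda>_. 0)" if "i < k" for i
    using iterated_brackets.generator[OF \<sigma>[OF that]] weights_nonzero \<sigma>[OF that] by auto
  have "admissible_order k p \<beta> \<sigma>"
    unfolding admissible_order_def
  proof (intro conjI allI impI)
    fix i j assume i: "i < k" and j: "j < k" and pr: "proportional (\<beta> (\<sigma> i)) (\<beta> (\<sigma> j))"
    obtain c where c: "c \<noteq> 0" "\<beta> (\<sigma> i) = (\<lambda>l. c * \<beta> (\<sigma> j) l)"
      using proportional_nonzero_factor[OF pr nz[OF i]] .
    have "ip_nat (\<beta> (\<sigma> j)) (p (\<sigma> j)) = ip_nat (\<beta> (\<sigma> j)) (p (\<sigma> i))"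
      using ip_eq_if_proportional[OF gen[OF j] _ nz[OF j] c(1)] gen[OF i] c(2) by simp
    then show "ip (\<beta> (\<sigma> i)) (\<lambda>l. int (p (\<sigma> i) l) - int (p (\<sigma> j) l)) = 0"
      unfolding ip_of_nat_diff c(2) ip_nat_scale by simp
  next
    fix i j assume i: "i < k" and j: "j < k"
      and np: "\<not> proportional (\<beta> (\<sigma> i)) (\<beta> (\<sigma> j)) \<and> i < j"
    then have np': "\<not> proportional (\<beta> (\<sigma> j)) (\<beta> (\<sigma> i))"
      using proportional_sym nz by blast
    have "(\<sigma> j, \<sigma> i) \<notin> R" using forward[OF j i] np by auto
    then show "ip (\<beta> (\<sigma> j)) (\<lambda>l. int (p (\<sigma> i) l)) = 0"
      using gen[OF i] gen[OF j] nz[OF i] nz[OF j] np' \<sigma>[OF i] \<sigma>[OF j]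
      unfolding R_def edge_def ip_of_nat by auto
    show "\<exists>r::nat. ip (\<beta> (\<sigma> i)) (\<lambda>l. int (p (\<sigma> j) l) + int r * int (p (\<sigma> i) l)) = 0"
      using ip_root_exists[OF gen[OF i] gen[OF j] np'] unfolding ip_of_nat_add_mult .
  qed (rule bij)
  then show ?thesis by blast
qed

end

theorem theorem2:
  fixes k :: nat
    and p :: "nat \<Rightarrow> 'n::finite \<Rightarrow> nat"
    and \<beta> :: "nat \<Rightarrow> 'n \<Rightarrow> 'k::field_char_0"
  assumes beta_nz: "\<forall>i<k. \<beta> i \<noteq> (\<lambda>_. 0)"
    and pos_weight: "\<forall>i<k. p i \<noteq> (\<lambda>_. 0)"
  shows "fin_dim (lie_gen {Delta (p i) (\<beta> i) | i. i < k}) \<longleftrightarrow>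
    (\<exists>\<sigma>. bij_betw \<sigma> {..<k} {..<k} \<and>
      (\<forall>i<k. \<forall>j<k. proportional (\<beta> (\<sigma> i)) (\<beta> (\<sigma> j)) \<longrightarrow>
          ip (\<beta> (\<sigma> i)) (\<lambda>l. int (p (\<sigma> i) l) - int (p (\<sigma> j) l)) = 0) \<and>
      (\<forall>i<k. \<forall>j<k. \<not> proportional (\<beta> (\<sigma> i)) (\<beta> (\<sigma> j)) \<and> i < j \<longrightarrow>
          ip (\<beta> (\<sigma> j)) (\<lambda>l. int (p (\<sigma> i) l)) = 0 \<and>
          (\<exists>r::nat. ip (\<beta> (\<sigma> i)) (\<lambda>l. int (p (\<sigma> j) l) + int r * int (p (\<sigma> i) l)) = 0)))"
  unfolding admissible_order_def[symmetric]
proof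
  assume fd: "fin_dim (lie_gen {Delta (p i) (\<beta> i) | i. i < k})"
  have "\<forall>(a, v) \<in> iterated_brackets k p \<beta>. Delta a v \<in> lie_gen {Delta (p i) (\<beta> i) | i. i < k}"
    using Delta_iterated_brackets by blast
  then have "finite_exponents k p \<beta>"
    using fin_dim_finite_exponents[OF fd] beta_nz pos_weight by unfold_locales
  then show "\<exists>\<sigma>. admissible_order k p \<beta> \<sigma>"
    by (rule finite_exponents.admissible_order_exists)
next
  assume "\<exists>\<sigma>. admissible_order k p \<beta> \<sigma>"
  then obtain \<sigma> where \<sigma>: "admissible_order k p \<beta> \<sigma>" ..
  interpret reordered: admissible_family k "\<lambda>i. p (\<sigma> i)" "\<lambda>i. \<beta> (\<sigma> i)"
    using admissible_family_reorder[OF beta_nz \<sigma>] .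
  have "bij_betw \<sigma> {..<k} {..<k}" using \<sigma> unfolding admissible_order_def by blast
  then show "fin_dim (lie_gen {Delta (p i) (\<beta> i) | i. i < k})"
    using reordered.fin_dim_lie_gen by (simp add: generators_reorder)
qed

end
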